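(* Let $n\ge1$ and let $\mathrm{adj}\colon K\dashv N$ be the adjunction between $\mathrm{s}^n\mathcal S$ and $\mathbf{Rel}^n\mathbf{Cat}$. (i) For every $X\in\mathrm{s}^n\mathcal S$, the $n$-relative category $KX$ is completely determined by the $2$-skeleton $\mathrm{sk}_2X$ of $X$; that is, the inclusion $\mathrm{sk}_2X\to X$ induces an isomorphism $K(\mathrm{sk}_2X)\to KX$. (ii) For every $\mathcal C\in\mathbf{Rel}^n\mathbf{Cat}$, $N\mathcal C$ is completely determined by its $2$-skeleton and is its own $2$-coskeleton: for every $Y\in\mathrm{s}^n\mathcal S$, restriction gives a bijection between maps $Y\to N\mathcal C$ and maps $\mathrm{sk}_2Y\to\mathrm{sk}_2N\mathcal C$.
   Context: An $n$-relative category $\mathcal C=(a\mathcal C,v_1\mathcal C,\dots,v_n\mathcal C,w\mathcal C)$ consists of a category $a\mathcal C$ and subcategories $v_1\mathcal C,\dots,v_n\mathcal C,w\mathcal C\subset a\mathcal C$, each containing all objects, with $w\mathcal C\subset v_i\mathcal C$, such that every map of $a\mathcal C$ is a finite composite of maps in the $v_i\mathcal C$, and every relation in $a\mathcal C$ follows from commutativity of squares $y_2x_1=x_2y_1$ with $x_1,x_2\in v_i\mathcal C$, $y_1,y_2\in v_j\mathcal C$. $\mathbf{Rel}^n\mathbf{Cat}$ is the category of small $n$-relative categories and functors of ambient categories preserving $w$ and each $v_i$. For $p\ge0$, $\mathbf p$ is the poset $0\to\cdots\to p$ and $|\mathbf p|$ its discrete subcategory; $\mathbf p_n^{v_n}\times\cdots\times\mathbf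 p_1^{v_1}\times\mathbf q^w$ is the $n$-relative category with ambient category $\mathbf p_n\times\cdots\times\mathbf p_1\times\mathbf q$, $w=|\mathbf p_n|\times\cdots\times|\mathbf p_1|\times\mathbf q$, $v_i=|\mathbf p_n|\times\cdots\times\mathbf p_i\times\cdots\times|\mathbf p_1|\times\mathbf q$. $\mathrm{s}^n\mathcal S$ is the category of $(n+1)$-simplicial sets with multisimplices indexed by $(p_n,\dots,p_1,q)$; $\Delta[p_n,\dots,p_1,q]$ is the standard (representable) multisimplex. $N\mathcal C$ has as $(p_n,\dots,p_1,q)$-simplices the relative functors $\mathbf p_n^{v_n}\times\cdots\times\mathbf p_1^{v_1}\times\mathbf q^w\to\mathcal C$, and $K$ is its left adjoint, the colimit-preserving functor with $K\Delta[p_n,\dots,p_1,q]=\mathbf p_n^{v_n}\times\cdots\times\mathbf p_1^{v_1}\times\mathbf q^w$. A multisimplex of degree $(p_n,\dots,p_1,q)$ has total dimension $p_n+\cdots+p_1+q$; the $2$-skeleton $\mathrm{sk}_2X$ of $X$ is the smallest subobject of $X$ containing all multisimplices of total dimension $\le2$. *)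

theory Defs
  imports Main
begin

record ('o, 'a) cat =
  Ob   :: "'o set"
  Ar   :: "'a set"
  Dom  :: "'a \<Rightarrow> 'o"
  Cod  :: "'a \<Rightarrow> 'o"
  Idn  :: "'o \<Rightarrow> 'a"
  Comp :: "'a \<Rightarrow> 'a \<Rightarrow> 'a"   (* Comp g f = g o f *)

definition is_cat :: "('o, 'a) cat \<Rightarrow> bool" where
  "is_cat C \<longleftrightarrow>
     (\<forall>a\<in>Ob C. Idn C a \<in> Ar C \<and> Dom C (Idn C a) = a \<and> Cod C (Idn C a) = a) \<and>
     (\<forall>f\<in>Ar C. Dom C f \<in> Ob C \<and> Cod C f \<in> Ob C) \<and>
     (\<forall>f\<in>Ar C. \<forall>g\<in>Ar C. Cod C f = Dom C g \<longrightarrow>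
        Comp C g f \<in> Ar C \<and> Dom C (Comp C g f) = Dom C f \<and> Cod C (Comp C g f) = Cod C g) \<and>
     (\<forall>f\<in>Ar C. Comp C f (Idn C (Dom C f)) = f \<and> Comp C (Idn C (Cod C f)) f = f) \<and>
     (\<forall>f\<in>Ar C. \<forall>g\<in>Ar C. \<forall>h\<in>Ar C. Cod C f = Dom C g \<longrightarrow> Cod C g = Dom C h \<longrightarrow>
        Comp C h (Comp C g f) = Comp C (Comp C h g) f)"

definition is_wide_subcat :: "('o, 'a) cat \<Rightarrow> 'a set \<Rightarrow> bool" where
  "is_wide_subcat C S \<longleftrightarrow> S \<subseteq> Ar C \<and> (\<forall>a\<in>Ob C. Idn C a \<in> S) \<and>
     (\<forall>f\<in>S. \<forall>g\<in>S. Cod C f = Dom C g \<longrightarrow> Comp C g f \<in> S)"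

text \<open>Paths (in diagrammatic order) of maps from a set E, from object a to object b,
  and their composites.\<close>
fun cpath :: "('o, 'a) cat \<Rightarrow> 'a set \<Rightarrow> 'o \<Rightarrow> 'o \<Rightarrow> 'a list \<Rightarrow> bool" where
  "cpath C E a b [] \<longleftrightarrow> a = b \<and> a \<in> Ob C"
| "cpath C E a b (f # fs) \<longleftrightarrow> f \<in> E \<and> Dom C f = a \<and> cpath C E (Cod C f) b fs"

fun ceval :: "('o, 'a) cat \<Rightarrow> 'o \<Rightarrow> 'a list \<Rightarrow> 'a" where
  "ceval C a [] = Idn C a"
| "ceval C a (f # fs) = Comp C (ceval C (Cod C f) fs) f"

record ('o, 'a) relcat =
  amb :: "('o, 'a) cat"
  V   :: "nat \<Rightarrow> 'a set"
  W   :: "'a set"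

definition vmaps :: "nat \<Rightarrow> ('o, 'a) relcat \<Rightarrow> 'a set" where
  "vmaps n R = (\<Union>i\<in>{1..n}. V R i)"

definition sq_step :: "nat \<Rightarrow> ('o, 'a) relcat \<Rightarrow> 'o \<Rightarrow> 'o \<Rightarrow> 'a list \<Rightarrow> 'a list \<Rightarrow> bool" where
  "sq_step n R a b p q \<longleftrightarrow>
     cpath (amb R) (vmaps n R) a b p \<and> cpath (amb R) (vmaps n R) a b q \<and>
     (\<exists>us ws.
        (\<exists>c\<in>Ob (amb R). p = us @ [Idn (amb R) c] @ ws \<and> q = us @ ws) \<or>
        (\<exists>i\<in>{1..n}. \<exists>j\<in>{1..n}. \<exists>x1 x2 y1 y2.
           x1 \<in> V R i \<and> x2 \<in> V R i \<and> y1 \<in> V R j \<and> y2 \<in> V R j \<and>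
           Cod (amb R) x1 = Dom (amb R) y2 \<and> Cod (amb R) y1 = Dom (amb R) x2 \<and>
           Comp (amb R) y2 x1 = Comp (amb R) x2 y1 \<and>
           p = us @ [x1, y2] @ ws \<and> q = us @ [y1, x2] @ ws))"

definition path_equiv :: "nat \<Rightarrow> ('o, 'a) relcat \<Rightarrow> 'o \<Rightarrow> 'o \<Rightarrow> 'a list \<Rightarrow> 'a list \<Rightarrow> bool" where
  "path_equiv n R a b = (\<lambda>p q. sq_step n R a b p q \<or> sq_step n R a b q p)\<^sup>*\<^sup>*"

definition is_relcat :: "nat \<Rightarrow> ('o, 'a) relcat \<Rightarrow> bool" where
  "is_relcat n R \<longleftrightarrow>
     is_cat (amb R) \<and>
     (\<forall>i\<in>{1..n}. is_wide_subcat (amb R) (V R i)) \<and>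
     is_wide_subcat (amb R) (W R) \<and>
     (\<forall>i\<in>{1..n}. W R \<subseteq> V R i) \<and>
     (\<forall>f\<in>Ar (amb R). \<exists>fs. cpath (amb R) (vmaps n R) (Dom (amb R) f) (Cod (amb R) f) fs \<and>
                               ceval (amb R) (Dom (amb R) f) fs = f) \<and>
     (\<forall>a b p q. cpath (amb R) (vmaps n R) a b p \<longrightarrow> cpath (amb R) (vmaps n R) a b q \<longrightarrow>
        ceval (amb R) a p = ceval (amb R) a q \<longrightarrow> path_equiv n R a b p q)"

text \<open>Morphisms of Rel^n Cat: functors of ambient categories (given by their action on maps,
  extensional outside the maps) preserving w and each v_i.\<close>
definition is_relfun :: "nat \<Rightarrow> ('o, 'a) relcat \<Rightarrow> ('p, 'b) relcat \<Rightarrow> ('a \<Rightarrow> 'b) \<Rightarrow> bool" where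
  "is_relfun n R S G \<longleftrightarrow>
     (\<forall>f\<in>Ar (amb R). G f \<in> Ar (amb S)) \<and>
     (\<forall>f\<in>Ar (amb R).
        Dom (amb S) (G f) = Dom (amb S) (G (Idn (amb R) (Dom (amb R) f))) \<and>
        Cod (amb S) (G f) = Dom (amb S) (G (Idn (amb R) (Cod (amb R) f)))) \<and>
     (\<forall>a\<in>Ob (amb R). G (Idn (amb R) a) = Idn (amb S) (Dom (amb S) (G (Idn (amb R) a)))) \<and>
     (\<forall>f\<in>Ar (amb R). \<forall>g\<in>Ar (amb R). Cod (amb R) f = Dom (amb R) g \<longrightarrow>
        G (Comp (amb R) g f) = Comp (amb S) (G g) (G f)) \<and>
     (\<forall>f\<in>W R. G f \<in> W S) \<and>
     (\<forall>i\<in>{1..n}. \<forall>f\<in>V R i. G f \<in> V S i) \<and>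
     (\<forall>f. f \<notin> Ar (amb R) \<longrightarrow> G f = undefined)"

definition relid :: "('o, 'a) relcat \<Rightarrow> 'a \<Rightarrow> 'a" where
  "relid R = (\<lambda>f. if f \<in> Ar (amb R) then f else undefined)"

definition relcomp :: "('o, 'a) relcat \<Rightarrow> ('a \<Rightarrow> 'b) \<Rightarrow> ('b \<Rightarrow> 'c) \<Rightarrow> 'a \<Rightarrow> 'c" where
  "relcomp R G H = (\<lambda>f. if f \<in> Ar (amb R) then H (G f) else undefined)"

definition relcat_iso :: "nat \<Rightarrow> ('o, 'a) relcat \<Rightarrow> ('p, 'b) relcat \<Rightarrow> ('a \<Rightarrow> 'b) \<Rightarrow> bool" where
  "relcat_iso n R S G \<longleftrightarrow> is_relfun n R S G \<and>
     (\<exists>H. is_relfun n S R H \<and> relcomp R G H = relid R \<and> relcomp S H G = relid S)"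

text \<open>A multidegree (p_n,...,p_1,q) is encoded as a list d of length n+1 with
  d!0 = q and d!i = p_i for 1 \<le> i \<le> n.  A multisimplicial operator theta : d' \<rightarrow> d is a
  list of n+1 monotone maps theta!k : {0..d'!k} \<rightarrow> {0..d!k}.\<close>

definition is_op :: "nat \<Rightarrow> nat list \<Rightarrow> nat list \<Rightarrow> (nat \<Rightarrow> nat) list \<Rightarrow> bool" where
  "is_op n d' d \<theta> \<longleftrightarrow> length d = Suc n \<and> length d' = Suc n \<and> length \<theta> = Suc n \<and>
     (\<forall>k<Suc n. mono_on {0..d'!k} (\<theta>!k) \<and> (\<theta>!k) ` {0..d'!k} \<subseteq> {0..d!k})"

text \<open>Smp X d is the set of multisimplices of degree d; Act X d d' theta x is theta^* x for
  x of degree d and theta : d' \<rightarrow> d.\<close>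
record 'x msset =
  Smp :: "nat list \<Rightarrow> 'x set"
  Act :: "nat list \<Rightarrow> nat list \<Rightarrow> (nat \<Rightarrow> nat) list \<Rightarrow> 'x \<Rightarrow> 'x"

definition is_msset :: "nat \<Rightarrow> 'x msset \<Rightarrow> bool" where
  "is_msset n X \<longleftrightarrow>
     (\<forall>d. length d \<noteq> Suc n \<longrightarrow> Smp X d = {}) \<and>
     (\<forall>d d' \<theta> x. is_op n d' d \<theta> \<longrightarrow> x \<in> Smp X d \<longrightarrow> Act X d d' \<theta> x \<in> Smp X d') \<and>
     (\<forall>d x. x \<in> Smp X d \<longrightarrow> Act X d d (replicate (Suc n) id) x = x) \<and>
     (\<forall>d d' d'' \<theta> \<phi> x. is_op n d' d \<theta> \<longrightarrow> is_op n d'' d' \<phi> \<longrightarrow> x \<in> Smp X d \<longrightarrow>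
        Act X d' d'' \<phi> (Act X d d' \<theta> x) = Act X d d'' (map2 (\<circ>) \<theta> \<phi>) x) \<and>
     (\<forall>d d' \<theta> \<theta>' x. is_op n d' d \<theta> \<longrightarrow> is_op n d' d \<theta>' \<longrightarrow> x \<in> Smp X d \<longrightarrow>
        (\<forall>k<Suc n. \<forall>m\<le>d'!k. (\<theta>!k) m = (\<theta>'!k) m) \<longrightarrow>
        Act X d d' \<theta> x = Act X d d' \<theta>' x)"

definition is_msmap :: "nat \<Rightarrow> 'x msset \<Rightarrow> 'y msset \<Rightarrow> (nat list \<Rightarrow> 'x \<Rightarrow> 'y) \<Rightarrow> bool" where
  "is_msmap n X Y f \<longleftrightarrow>
     (\<forall>d x. x \<in> Smp X d \<longrightarrow> f d x \<in> Smp Y d) \<and>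
     (\<forall>d d' \<theta> x. is_op n d' d \<theta> \<longrightarrow> x \<in> Smp X d \<longrightarrow>
        f d' (Act X d d' \<theta> x) = Act Y d d' \<theta> (f d x)) \<and>
     (\<forall>d x. x \<notin> Smp X d \<longrightarrow> f d x = undefined)"

definition mshom :: "nat \<Rightarrow> 'x msset \<Rightarrow> 'y msset \<Rightarrow> (nat list \<Rightarrow> 'x \<Rightarrow> 'y) set" where
  "mshom n X Y = {f. is_msmap n X Y f}"

definition msid :: "'x msset \<Rightarrow> nat list \<Rightarrow> 'x \<Rightarrow> 'x" where
  "msid X = (\<lambda>d x. if x \<in> Smp X d then x else undefined)"

definition mscomp :: "'x msset \<Rightarrow> (nat list \<Rightarrow> 'x \<Rightarrow> 'y) \<Rightarrow> (nat list \<Rightarrow> 'y \<Rightarrow> 'z)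
    \<Rightarrow> nat list \<Rightarrow> 'x \<Rightarrow> 'z" where
  "mscomp X f g = (\<lambda>d x. if x \<in> Smp X d then g d (f d x) else undefined)"

definition msrestr :: "'x msset \<Rightarrow> (nat list \<Rightarrow> 'x \<Rightarrow> 'y) \<Rightarrow> nat list \<Rightarrow> 'x \<Rightarrow> 'y" where
  "msrestr X f = (\<lambda>d x. if x \<in> Smp X d then f d x else undefined)"

text \<open>The 2-skeleton: the subobject generated by the multisimplices of total dimension \<le> 2.\<close>
definition sk2 :: "nat \<Rightarrow> 'x msset \<Rightarrow> 'x msset" where
  "sk2 n X = X\<lparr>Smp := (\<lambda>d. {Act X d0 d \<theta> x | d0 \<theta> x.
       sum_list d0 \<le> 2 \<and> x \<in> Smp X d0 \<and> is_op n d d0 \<theta>})\<rparr>"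

text \<open>The category p_n x ... x p_1 x q is the poset of lists s of length n+1 with s!k \<le> d!k;
  a map is a pair (s,t) with s \<le> t componentwise.  It is in w iff s,t agree in all
  coordinates 1..n, and in v_i iff s,t agree in all coordinates 1..n other than i.\<close>
definition vpair :: "nat \<Rightarrow> nat list \<Rightarrow> nat list \<Rightarrow> nat list \<Rightarrow> bool" where
  "vpair n d s t \<longleftrightarrow> length d = Suc n \<and> length s = Suc n \<and> length t = Suc n \<and>
     (\<forall>k<Suc n. s!k \<le> t!k \<and> t!k \<le> d!k)"

definition in_w :: "nat \<Rightarrow> nat list \<Rightarrow> nat list \<Rightarrow> bool" where
  "in_w n s t \<longleftrightarrow> (\<forall>k\<in>{1..n}. s!k = t!k)"

definition in_v :: "nat \<Rightarrow> nat \<Rightarrow> nat list \<Rightarrow> nat list \<Rightarrow> bool" where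
  "in_v n i s t \<longleftrightarrow> (\<forall>k\<in>{1..n}. k \<noteq> i \<longrightarrow> s!k = t!k)"

text \<open>A (p_n,...,p_1,q)-simplex of N C: a relative functor from the multisimplex relative
  category to C, given by its (extensional) action on maps (s,t).\<close>
definition nsimp :: "nat \<Rightarrow> ('o, 'a) relcat \<Rightarrow> nat list \<Rightarrow> (nat list \<times> nat list \<Rightarrow> 'a) \<Rightarrow> bool" where
  "nsimp n R d F \<longleftrightarrow> length d = Suc n \<and>
     (\<forall>s t. vpair n d s t \<longrightarrow> F (s,t) \<in> Ar (amb R) \<and>
        Dom (amb R) (F (s,t)) = Dom (amb R) (F (s,s)) \<and>
        Cod (amb R) (F (s,t)) = Dom (amb R) (F (t,t))) \<and>
     (\<forall>s. vpair n d s s \<longrightarrow> F (s,s) = Idn (amb R) (Dom (amb R) (F (s,s)))) \<and>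
     (\<forall>s t u. vpair n d s t \<longrightarrow> vpair n d t u \<longrightarrow> Comp (amb R) (F (t,u)) (F (s,t)) = F (s,u)) \<and>
     (\<forall>s t. vpair n d s t \<longrightarrow> in_w n s t \<longrightarrow> F (s,t) \<in> W R) \<and>
     (\<forall>i\<in>{1..n}. \<forall>s t. vpair n d s t \<longrightarrow> in_v n i s t \<longrightarrow> F (s,t) \<in> V R i) \<and>
     (\<forall>s t. \<not> vpair n d s t \<longrightarrow> F (s,t) = undefined)"

definition opap :: "(nat \<Rightarrow> nat) list \<Rightarrow> nat list \<Rightarrow> nat list" where
  "opap \<theta> s = map2 (\<lambda>f x. f x) \<theta> s"

definition nerve :: "nat \<Rightarrow> ('o, 'a) relcat \<Rightarrow> (nat list \<times> nat list \<Rightarrow> 'a) msset" where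
  "nerve n R = \<lparr>Smp = (\<lambda>d. {F. nsimp n R d F}),
     Act = (\<lambda>d d' \<theta> F. (\<lambda>(s,t). if vpair n d' s t then F (opap \<theta> s, opap \<theta> t) else undefined))\<rparr>"

definition nmap :: "nat \<Rightarrow> ('o, 'a) relcat \<Rightarrow> ('a \<Rightarrow> 'b)
    \<Rightarrow> nat list \<Rightarrow> (nat list \<times> nat list \<Rightarrow> 'a) \<Rightarrow> (nat list \<times> nat list \<Rightarrow> 'b)" where
  "nmap n R H = (\<lambda>d F. if F \<in> Smp (nerve n R) d
      then (\<lambda>(s,t). if vpair n d s t then H (F (s,t)) else undefined) else undefined)"

text \<open>K (on objects), Km (on maps) together with a bijection Phi between relative functors
  K X \<rightarrow> C and maps X \<rightarrow> N C, natural in X and in C, exhibit K as a left adjoint of N.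
  (Here K X and the test objects C live in a common type.)\<close>
definition is_left_adjoint_of_N :: "nat \<Rightarrow> ('x msset \<Rightarrow> ('o, 'a) relcat)
    \<Rightarrow> ('x msset \<Rightarrow> 'x msset \<Rightarrow> (nat list \<Rightarrow> 'x \<Rightarrow> 'x) \<Rightarrow> 'a \<Rightarrow> 'a)
    \<Rightarrow> ('x msset \<Rightarrow> ('o, 'a) relcat \<Rightarrow> ('a \<Rightarrow> 'a) \<Rightarrow> nat list \<Rightarrow> 'x \<Rightarrow> (nat list \<times> nat list \<Rightarrow> 'a))
    \<Rightarrow> bool" where
  "is_left_adjoint_of_N n K Km \<Phi> \<longleftrightarrow>
     (\<forall>X. is_msset n X \<longrightarrow> is_relcat n (K X)) \<and>
     (\<forall>X Y f. is_msset n X \<longrightarrow> is_msset n Y \<longrightarrow> is_msmap n X Y f \<longrightarrow>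
        is_relfun n (K X) (K Y) (Km X Y f)) \<and>
     (\<forall>X. is_msset n X \<longrightarrow> Km X X (msid X) = relid (K X)) \<and>
     (\<forall>X Y Z f g. is_msset n X \<longrightarrow> is_msset n Y \<longrightarrow> is_msset n Z \<longrightarrow>
        is_msmap n X Y f \<longrightarrow> is_msmap n Y Z g \<longrightarrow>
        Km X Z (mscomp X f g) = relcomp (K X) (Km X Y f) (Km Y Z g)) \<and>
     (\<forall>X C. is_msset n X \<longrightarrow> is_relcat n C \<longrightarrow>
        bij_betw (\<Phi> X C) {G. is_relfun n (K X) C G} (mshom n X (nerve n C))) \<and>
     (\<forall>X Y C f G. is_msset n X \<longrightarrow> is_msset n Y \<longrightarrow> is_relcat n C \<longrightarrow>
        is_msmap n X Y f \<longrightarrow> is_relfun n (K Y) C G \<longrightarrow>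
        \<Phi> X C (relcomp (K X) (Km X Y f) G) = mscomp X f (\<Phi> Y C G)) \<and>
     (\<forall>X C D G H. is_msset n X \<longrightarrow> is_relcat n C \<longrightarrow> is_relcat n D \<longrightarrow>
        is_relfun n (K X) C G \<longrightarrow> is_relfun n C D H \<longrightarrow>
        \<Phi> X D (relcomp (K X) G H) = mscomp X (\<Phi> X C G) (nmap n C H))"

end

theory Submission
  imports Defs
begin

text \<open>A (p_n,...,p_1,q)-simplex of N C is a relative functor out of a grid poset, and a functor on
  a grid is determined by its edges: the map from s to t is the composite along the staircase
  that moves one coordinate at a time.  Conversely, edge data extend to a functor on the grid as
  soon as they respect identities, compose along each coordinate, and make the squares between
  two coordinates commute.  All of this is data of simplices of total dimension at most 2, so
  a map sk_2 Y \<rightarrow> N C extends uniquely to Y \<rightarrow> N C, which is (ii).  Part (i) follows by Yoneda: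
  K(sk_2 X) and K X corepresent the same functor C \<mapsto> Hom(sk_2 X, N C) = Hom(X, N C).\<close>

definition hom :: "('o, 'a) cat \<Rightarrow> 'o \<Rightarrow> 'o \<Rightarrow> 'a set" where
  "hom C a b = {f \<in> Ar C. Dom C f = a \<and> Cod C f = b}"

locale category =
  fixes C :: "('o, 'a) cat"
  assumes is_cat: "is_cat C"
begin

lemma id_hom: "a \<in> Ob C \<Longrightarrow> Idn C a \<in> hom C a a"
  using is_cat unfolding is_cat_def hom_def by blast

lemma hom_dom_ob: "f \<in> hom C a b \<Longrightarrow> a \<in> Ob C"
  using is_cat unfolding is_cat_def hom_def by blast

lemma comp_hom: "f \<in> hom C a b \<Longrightarrow> g \<in> hom C b c \<Longrightarrow> Comp C g f \<in> hom C a c"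
  using is_cat unfolding is_cat_def hom_def by auto

lemma comp_assoc:
  "f \<in> hom C a b \<Longrightarrow> g \<in> hom C b c \<Longrightarrow> h \<in> hom C c e \<Longrightarrow>
     Comp C h (Comp C g f) = Comp C (Comp C h g) f"
  using is_cat unfolding is_cat_def hom_def by auto

lemma comp_id_left: "f \<in> hom C a b \<Longrightarrow> Comp C (Idn C b) f = f"
  using is_cat unfolding is_cat_def hom_def by auto

lemma comp_id_right: "f \<in> hom C a b \<Longrightarrow> Comp C f (Idn C a) = f"
  using is_cat unfolding is_cat_def hom_def by auto

end

definition vec :: "nat \<Rightarrow> (nat \<Rightarrow> 'a) \<Rightarrow> 'a list" where
  "vec n f = map f [0..<Suc n]"

lemma vec_nth [simp]: "j < Suc n \<Longrightarrow> vec n f ! j = f j"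
  by (simp add: vec_def del: upt_Suc)

lemma length_vec [simp]: "length (vec n f) = Suc n"
  by (simp add: vec_def del: upt_Suc)

lemma vec_cong: "(\<And>j. j < Suc n \<Longrightarrow> f j = h j) \<Longrightarrow> vec n f = vec n h"
  unfolding vec_def by (intro map_cong) auto

definition grid_point :: "nat \<Rightarrow> nat list \<Rightarrow> nat list \<Rightarrow> bool" where
  "grid_point n d v \<longleftrightarrow> length v = Suc n \<and> (\<forall>j<Suc n. v!j \<le> d!j)"

lemma grid_point_update:
  "grid_point n d v \<Longrightarrow> j < Suc n \<Longrightarrow> b \<le> d!j \<Longrightarrow> grid_point n d (v[j:=b])"
  by (auto simp: grid_point_def nth_list_update)

lemma vpair_grid_point: "vpair n d s t \<Longrightarrow> grid_point n d s \<and> grid_point n d t"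
  by (auto simp: vpair_def grid_point_def intro: le_trans)

lemma vpair_refl: "length d = Suc n \<Longrightarrow> grid_point n d s \<Longrightarrow> vpair n d s s"
  by (simp add: vpair_def grid_point_def)

lemma vpair_trans: "vpair n d s t \<Longrightarrow> vpair n d t u \<Longrightarrow> vpair n d s u"
  by (auto simp: vpair_def intro: le_trans)

lemma vpair_update:
  "vpair n d v w \<Longrightarrow> j < Suc n \<Longrightarrow> v!j \<le> b \<Longrightarrow> b \<le> w!j \<Longrightarrow> vpair n d (v[j:=b]) w"
  by (auto simp: vpair_def nth_list_update)

lemma vpair_edge_bounds:
  "vpair n d v (v[k:=c]) \<Longrightarrow> k < Suc n \<Longrightarrow> v!k \<le> c \<and> c \<le> d!k"
  by (auto simp: vpair_def)

definition stair :: "nat \<Rightarrow> nat \<Rightarrow> nat list \<Rightarrow> nat list \<Rightarrow> nat list" where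
  "stair n k s t = vec n (\<lambda>j. if j < k then t!j else s!j)"

lemma length_stair [simp]: "length (stair n k s t) = Suc n"
  by (simp add: stair_def)

lemma stair_nth: "j < Suc n \<Longrightarrow> stair n k s t ! j = (if j < k then t!j else s!j)"
  by (simp add: stair_def)

lemma stair_0: "length s = Suc n \<Longrightarrow> stair n 0 s t = s"
  by (auto simp: stair_def intro!: nth_equalityI)

lemma stair_top: "length t = Suc n \<Longrightarrow> stair n (Suc n) s t = t"
  by (auto simp: stair_def intro!: nth_equalityI)

lemma stair_Suc: "k < Suc n \<Longrightarrow> stair n (Suc k) s t = (stair n k s t)[k := t!k]"
  by (auto simp: stair_def nth_list_update intro!: nth_equalityI)

lemma stair_update_late:
  "k \<le> j \<Longrightarrow> j < Suc n \<Longrightarrow> length v = Suc n \<Longrightarrow>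
     stair n k (v[j:=b]) w = (stair n k v w)[j:=b]"
  by (auto simp: stair_nth nth_list_update intro!: nth_equalityI)

lemma stair_update_early:
  "j < k \<Longrightarrow> j < Suc n \<Longrightarrow> length v = Suc n \<Longrightarrow> stair n k (v[j:=b]) w = stair n k v w"
  by (auto simp: stair_nth nth_list_update intro!: nth_equalityI)

lemma vpair_stair: "vpair n d s t \<Longrightarrow> vpair n d s (stair n k s t) \<and> vpair n d (stair n k s t) t"
  by (auto simp: vpair_def stair_nth)

lemma vpair_stair_Suc:
  "vpair n d s t \<Longrightarrow> k < Suc n \<Longrightarrow> vpair n d (stair n k s t) (stair n (Suc k) s t)"
  by (auto simp: vpair_def stair_nth)

section \<open>Diagrams on a grid generated by their edges\<close>

locale grid_edges = category R
  for R :: "('o, 'a) cat" +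
  fixes n :: nat and d :: "nat list"
    and edge :: "nat \<Rightarrow> nat list \<Rightarrow> nat \<Rightarrow> 'a" and vertex :: "nat list \<Rightarrow> 'o"
  assumes length_d: "length d = Suc n"
    and edge_hom: "grid_point n d v \<Longrightarrow> k < Suc n \<Longrightarrow> v!k \<le> b \<Longrightarrow> b \<le> d!k \<Longrightarrow>
       edge k v b \<in> hom R (vertex v) (vertex (v[k:=b]))"
    and edge_refl: "grid_point n d v \<Longrightarrow> k < Suc n \<Longrightarrow> edge k v (v!k) = Idn R (vertex v)"
    and edge_trans: "grid_point n d v \<Longrightarrow> k < Suc n \<Longrightarrow> v!k \<le> b \<Longrightarrow> b \<le> c \<Longrightarrow> c \<le> d!k \<Longrightarrow>
       Comp R (edge k (v[k:=b]) c) (edge k v b) = edge k v c"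
    and edge_square: "grid_point n d v \<Longrightarrow> j < Suc n \<Longrightarrow> k < Suc n \<Longrightarrow> j \<noteq> k \<Longrightarrow>
       v!j \<le> b \<Longrightarrow> b \<le> d!j \<Longrightarrow> v!k \<le> c \<Longrightarrow> c \<le> d!k \<Longrightarrow>
       Comp R (edge k (v[j:=b]) c) (edge j v b) = Comp R (edge j (v[k:=c]) b) (edge k v c)"
begin

primrec stair_comp :: "nat \<Rightarrow> nat list \<Rightarrow> nat list \<Rightarrow> 'a" where
  "stair_comp 0 s t = Idn R (vertex s)"
| "stair_comp (Suc k) s t = Comp R (edge k (stair n k s t) (t!k)) (stair_comp k s t)"

definition grid_map :: "nat list \<Rightarrow> nat list \<Rightarrow> 'a" where
  "grid_map s t = stair_comp (Suc n) s t"

lemma vertex_ob: "grid_point n d v \<Longrightarrow> vertex v \<in> Ob R"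
  using edge_hom[of v 0 "v!0"] hom_dom_ob by (auto simp: grid_point_def)

lemma stair_edge_hom:
  assumes st: "vpair n d s t" and k: "k < Suc n"
  shows "edge k (stair n k s t) (t!k) \<in> hom R (vertex (stair n k s t)) (vertex (stair n (Suc k) s t))"
proof -
  have "grid_point n d (stair n k s t)" using vpair_grid_point vpair_stair st by blast
  moreover have "stair n k s t ! k \<le> t!k" "t!k \<le> d!k" using st k by (auto simp: vpair_def stair_nth)
  ultimately show ?thesis using edge_hom k stair_Suc[OF k] by metis
qed

lemma stair_comp_hom:
  "vpair n d s t \<Longrightarrow> k \<le> Suc n \<Longrightarrow> stair_comp k s t \<in> hom R (vertex s) (vertex (stair n k s t))"
proof (induction k)
  case 0
  then have "grid_point n d s" using vpair_grid_point by blast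
  then show ?case using id_hom vertex_ob stair_0 by (simp add: grid_point_def)
next
  case (Suc k)
  then show ?case using comp_hom stair_edge_hom by simp
qed

lemma grid_map_hom: "vpair n d s t \<Longrightarrow> grid_map s t \<in> hom R (vertex s) (vertex t)"
  using stair_comp_hom[of s t "Suc n"] stair_top[of t n s]
  by (simp add: grid_map_def vpair_def)

lemma edge_hom_vpair:
  "vpair n d v w \<Longrightarrow> j < Suc n \<Longrightarrow> v!j \<le> b \<Longrightarrow> b \<le> w!j \<Longrightarrow>
     edge j v b \<in> hom R (vertex v) (vertex (v[j:=b]))"
  using edge_hom vpair_grid_point by (meson le_trans vpair_def)

lemma stair_comp_edge_commute:
  assumes vw: "vpair n d v w" and j: "j < Suc n" and b: "v!j \<le> b" "b \<le> w!j"
  shows "k \<le> j \<Longrightarrow>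
    Comp R (stair_comp k (v[j:=b]) w) (edge j v b) = Comp R (edge j (stair n k v w) b) (stair_comp k v w)"
proof (induction k)
  case 0
  have "length v = Suc n" using vw by (simp add: vpair_def)
  then show ?case using edge_hom_vpair[OF vw j b] comp_id_left comp_id_right stair_0 by simp
next
  case (Suc k)
  let ?u = "stair n k v w" and ?v' = "v[j:=b]"
  have kj: "k < j" and k: "k < Suc n" using Suc j by auto
  have lv: "length v = Suc n" using vw by (simp add: vpair_def)
  have vw': "vpair n d ?v' w" using vpair_update[OF vw j b] .
  have uw: "vpair n d ?u w" using vpair_stair[OF vw] by blast
  have u: "?u!j = v!j" "?u!k = v!k" using kj j by (simp_all add: stair_nth)
  have vk: "v!k \<le> w!k" and wd: "w!j \<le> d!j" "w!k \<le> d!k" using vw k j by (simp_all add: vpair_def)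
  have u': "stair n k ?v' w = ?u[j:=b]" using stair_update_late[of k j n v b w] kj j lv by simp
  have uS: "stair n (Suc k) v w = ?u[k := w!k]" using stair_Suc[OF k] .
  have ujw: "vpair n d (?u[j:=b]) w" using vpair_update[OF uw j] u b by simp
  have ukw: "vpair n d (?u[k:=w!k]) w" using vpair_stair[OF vw, of "Suc k"] uS by simp
  have h1: "edge j v b \<in> hom R (vertex v) (vertex ?v')" using edge_hom_vpair[OF vw j b] .
  have h2: "stair_comp k ?v' w \<in> hom R (vertex ?v') (vertex (?u[j:=b]))"
    using stair_comp_hom[OF vw', of k] k u' by simp
  have h3: "edge k (?u[j:=b]) (w!k) \<in> hom R (vertex (?u[j:=b])) (vertex (?u[j:=b,k:=w!k]))"
    using edge_hom_vpair[OF ujw k] u kj vk by (simp add: nth_list_update)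
  have h4: "stair_comp k v w \<in> hom R (vertex v) (vertex ?u)" using stair_comp_hom[OF vw, of k] k by simp
  have h5: "edge j ?u b \<in> hom R (vertex ?u) (vertex (?u[j:=b]))" using edge_hom_vpair[OF uw j] u b by simp
  have h6: "edge k ?u (w!k) \<in> hom R (vertex ?u) (vertex (?u[k:=w!k]))"
    using edge_hom_vpair[OF uw k] u vk by simp
  have h7: "edge j (?u[k:=w!k]) b \<in> hom R (vertex (?u[k:=w!k])) (vertex (?u[k:=w!k,j:=b]))"
    using edge_hom_vpair[OF ukw j] u kj b by (simp add: nth_list_update)
  have square: "Comp R (edge k (?u[j:=b]) (w!k)) (edge j ?u b)
      = Comp R (edge j (?u[k:=w!k]) b) (edge k ?u (w!k))"
    using edge_square[of ?u j k b "w!k"] vpair_grid_point[OF uw] kj j k u b vk wd by simp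
  have "Comp R (stair_comp (Suc k) ?v' w) (edge j v b)
      = Comp R (edge k (?u[j:=b]) (w!k)) (Comp R (stair_comp k ?v' w) (edge j v b))"
    using comp_assoc[OF h1 h2 h3] u' by simp
  also have "\<dots> = Comp R (Comp R (edge k (?u[j:=b]) (w!k)) (edge j ?u b)) (stair_comp k v w)"
    using Suc kj comp_assoc[OF h4 h5 h3] by simp
  also have "\<dots> = Comp R (edge j (?u[k:=w!k]) b) (Comp R (edge k ?u (w!k)) (stair_comp k v w))"
    using square comp_assoc[OF h4 h6 h7] by simp
  also have "\<dots> = Comp R (edge j (stair n (Suc k) v w) b) (stair_comp (Suc k) v w)"
    using uS by simp
  finally show ?case .
qed

lemma stair_comp_Suc_absorb_edge:
  assumes vw: "vpair n d v w" and j: "j < Suc n" and b: "v!j \<le> b" "b \<le> w!j"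
  shows "Comp R (stair_comp (Suc j) (v[j:=b]) w) (edge j v b) = stair_comp (Suc j) v w"
proof -
  let ?u = "stair n j v w" and ?v' = "v[j:=b]"
  have lv: "length v = Suc n" using vw by (simp add: vpair_def)
  have vw': "vpair n d ?v' w" using vpair_update[OF vw j b] .
  have uw: "vpair n d ?u w" using vpair_stair[OF vw] by blast
  have u: "?u!j = v!j" using j by (simp add: stair_nth)
  have u': "stair n j ?v' w = ?u[j:=b]" using stair_update_late[of j j n v b w] j lv by simp
  have ujw: "vpair n d (?u[j:=b]) w" using vpair_update[OF uw j] u b by simp
  have wd: "w!j \<le> d!j" using vw j by (simp add: vpair_def)
  have h1: "edge j v b \<in> hom R (vertex v) (vertex ?v')" using edge_hom_vpair[OF vw j b] .
  have h2: "stair_comp j ?v' w \<in> hom R (vertex ?v') (vertex (?u[j:=b]))"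
    using stair_comp_hom[OF vw', of j] j u' by simp
  have h3: "edge j (?u[j:=b]) (w!j) \<in> hom R (vertex (?u[j:=b])) (vertex (?u[j:=w!j]))"
    using edge_hom_vpair[OF ujw j] j lv b(2) by simp
  have h4: "stair_comp j v w \<in> hom R (vertex v) (vertex ?u)" using stair_comp_hom[OF vw, of j] j by simp
  have h5: "edge j ?u b \<in> hom R (vertex ?u) (vertex (?u[j:=b]))" using edge_hom_vpair[OF uw j] u b by simp
  have "Comp R (stair_comp (Suc j) ?v' w) (edge j v b)
      = Comp R (edge j (?u[j:=b]) (w!j)) (Comp R (stair_comp j ?v' w) (edge j v b))"
    using comp_assoc[OF h1 h2 h3] u' by simp
  also have "\<dots> = Comp R (Comp R (edge j (?u[j:=b]) (w!j)) (edge j ?u b)) (stair_comp j v w)"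
    using stair_comp_edge_commute[OF vw j b, of j] comp_assoc[OF h4 h5 h3] by simp
  also have "\<dots> = stair_comp (Suc j) v w"
    using edge_trans[of ?u j b "w!j"] vpair_grid_point[OF uw] j u b wd by simp
  finally show ?thesis .
qed

lemma stair_comp_absorb_edge:
  assumes vw: "vpair n d v w" and j: "j < Suc n" and b: "v!j \<le> b" "b \<le> w!j"
  shows "j < k \<Longrightarrow> k \<le> Suc n \<Longrightarrow> Comp R (stair_comp k (v[j:=b]) w) (edge j v b) = stair_comp k v w"
proof (induction k)
  case (Suc k)
  show ?case
  proof (cases "k = j")
    case True
    then show ?thesis using stair_comp_Suc_absorb_edge[OF vw j b] by simp
  next
    case False
    then have jk: "j < k" and k: "k < Suc n" using Suc by auto
    have lv: "length v = Suc n" using vw by (simp add: vpair_def)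
    have h: "stair_comp k (v[j:=b]) w \<in> hom R (vertex (v[j:=b])) (vertex (stair n k v w))"
      using stair_comp_hom[OF vpair_update[OF vw j b], of k] k stair_update_early[OF jk j lv] by simp
    show ?thesis
      using comp_assoc[OF edge_hom_vpair[OF vw j b] h stair_edge_hom[OF vw k]] Suc jk k
        stair_update_early[OF jk j lv]
      by simp
  qed
qed simp

lemma grid_map_absorb_edge:
  "vpair n d v w \<Longrightarrow> j < Suc n \<Longrightarrow> v!j \<le> b \<Longrightarrow> b \<le> w!j \<Longrightarrow>
     Comp R (grid_map (v[j:=b]) w) (edge j v b) = grid_map v w"
  unfolding grid_map_def by (rule stair_comp_absorb_edge) auto

lemma grid_map_after_stair_comp:
  assumes st: "vpair n d s t" and tu: "vpair n d t u"
  shows "k \<le> Suc n \<Longrightarrow> Comp R (grid_map (stair n k s t) u) (stair_comp k s t) = grid_map s u"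
proof (induction k)
  case 0
  have "length s = Suc n" using st by (simp add: vpair_def)
  then show ?case using grid_map_hom[OF vpair_trans[OF st tu]] comp_id_right stair_0 by simp
next
  case (Suc k)
  let ?m = "stair n k s t"
  have k: "k < Suc n" using Suc by simp
  have mt: "vpair n d ?m t" using vpair_stair[OF st] by blast
  have mu: "vpair n d ?m u" using vpair_trans[OF mt tu] .
  have b: "?m!k \<le> t!k" "t!k \<le> u!k" using st tu k by (auto simp: vpair_def stair_nth)
  have h1: "stair_comp k s t \<in> hom R (vertex s) (vertex ?m)" using stair_comp_hom[OF st] k by simp
  have h3: "grid_map (stair n (Suc k) s t) u \<in> hom R (vertex (stair n (Suc k) s t)) (vertex u)"
    using grid_map_hom vpair_trans vpair_stair[OF st, of "Suc k"] tu by blast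
  have "Comp R (grid_map (stair n (Suc k) s t) u) (stair_comp (Suc k) s t)
      = Comp R (Comp R (grid_map (?m[k:=t!k]) u) (edge k ?m (t!k))) (stair_comp k s t)"
    using comp_assoc[OF h1 stair_edge_hom[OF st k] h3] stair_Suc[OF k] by simp
  also have "\<dots> = grid_map s u"
    using grid_map_absorb_edge[OF mu k b] Suc k by simp
  finally show ?case .
qed

lemma grid_map_comp: "vpair n d s t \<Longrightarrow> vpair n d t u \<Longrightarrow> Comp R (grid_map t u) (grid_map s t) = grid_map s u"
  using grid_map_after_stair_comp[of s t u "Suc n"] stair_top[of t n s]
  by (simp add: grid_map_def[of s t] vpair_def)

lemma grid_map_refl: "grid_point n d s \<Longrightarrow> grid_map s s = Idn R (vertex s)"
proof -
  assume s: "grid_point n d s"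
  have "k \<le> Suc n \<Longrightarrow> stair_comp k s s = Idn R (vertex s)" for k
  proof (induction k)
    case (Suc k)
    have "stair n k s s = s" using s by (auto simp: stair_nth grid_point_def intro!: nth_equalityI)
    then show ?case
      using Suc edge_refl[OF s, of k] comp_id_left[OF id_hom[OF vertex_ob[OF s]]] by simp
  qed simp
  from this[OF order_refl] show ?thesis unfolding grid_map_def .
qed

lemma grid_map_edge:
  assumes v: "grid_point n d v" and k: "k < Suc n" and c: "v!k \<le> c" "c \<le> d!k"
  shows "grid_map v (v[k:=c]) = edge k v c"
proof -
  have v': "grid_point n d (v[k:=c])" using grid_point_update[OF v k c(2)] .
  have "vpair n d v (v[k:=c])"
    using v v' k c length_d by (auto simp: vpair_def grid_point_def nth_list_update)
  then have "Comp R (grid_map (v[k:=c]) (v[k:=c])) (edge k v c) = grid_map v (v[k:=c])"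
    using grid_map_absorb_edge[of v "v[k:=c]" k c] k c v by (simp add: grid_point_def)
  then show ?thesis
    using grid_map_refl[OF v'] comp_id_left[OF edge_hom[OF v k c]] by simp
qed

lemma grid_map_in_subcat:
  assumes S: "is_wide_subcat R S" and st: "vpair n d s t"
    and edges_in: "\<And>k v b. k < Suc n \<Longrightarrow> s!k \<noteq> t!k \<Longrightarrow> grid_point n d v \<Longrightarrow> v!k \<le> b \<Longrightarrow> b \<le> d!k \<Longrightarrow>
       edge k v b \<in> S"
  shows "grid_map s t \<in> S"
proof -
  have "k \<le> Suc n \<Longrightarrow> stair_comp k s t \<in> S" for k
  proof (induction k)
    case 0
    then show ?case
      using S vertex_ob vpair_grid_point[OF st] by (simp add: is_wide_subcat_def)
  next
    case (Suc k)
    let ?m = "stair n k s t"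
    have k: "k < Suc n" using Suc by simp
    have m: "grid_point n d ?m" using vpair_grid_point vpair_stair[OF st] by blast
    have b: "?m!k \<le> t!k" "t!k \<le> d!k" using st k by (auto simp: vpair_def stair_nth)
    have "edge k ?m (t!k) \<in> S"
    proof (cases "s!k = t!k")
      case True
      then have "edge k ?m (t!k) = Idn R (vertex ?m)" using edge_refl[OF m k] k by (simp add: stair_nth)
      then show ?thesis using S vertex_ob[OF m] by (simp add: is_wide_subcat_def)
    qed (use edges_in k m b in blast)
    moreover have "Cod R (stair_comp k s t) = Dom R (edge k ?m (t!k))"
      using stair_comp_hom[OF st, of k] stair_edge_hom[OF st k] k by (simp add: hom_def)
    ultimately show ?case using Suc k S by (simp add: is_wide_subcat_def)
  qed
  from this[OF order_refl] show ?thesis unfolding grid_map_def .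
qed

end

lemma is_opI:
  assumes "length d = Suc n" "length d' = Suc n" "length \<theta> = Suc n"
    and "\<And>k a b. k < Suc n \<Longrightarrow> a \<le> b \<Longrightarrow> b \<le> d'!k \<Longrightarrow> (\<theta>!k) a \<le> (\<theta>!k) b \<and> (\<theta>!k) b \<le> d!k"
  shows "is_op n d' d \<theta>"
  unfolding is_op_def mono_on_def using assms by (auto simp: image_subset_iff) (meson le0)

lemma is_opD:
  "is_op n d' d \<theta> \<Longrightarrow> k < Suc n \<Longrightarrow> a \<le> b \<Longrightarrow> b \<le> d'!k \<Longrightarrow> (\<theta>!k) a \<le> (\<theta>!k) b \<and> (\<theta>!k) b \<le> d!k"
  unfolding is_op_def mono_on_def by (auto simp: image_subset_iff)

lemma is_op_length: "is_op n d' d \<theta> \<Longrightarrow> length d = Suc n \<and> length d' = Suc n \<and> length \<theta> = Suc n"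
  unfolding is_op_def by blast

lemma is_op_vec:
  assumes "length d = Suc n" "length d' = Suc n"
    and "\<And>k a b. k < Suc n \<Longrightarrow> a \<le> b \<Longrightarrow> b \<le> d'!k \<Longrightarrow> f k a \<le> f k b \<and> f k b \<le> d!k"
  shows "is_op n d' d (vec n f)"
  using assms by (intro is_opI) auto

lemma is_op_comp: "is_op n d' d \<theta> \<Longrightarrow> is_op n d'' d' \<phi> \<Longrightarrow> is_op n d'' d (map2 (\<circ>) \<theta> \<phi>)"
  by (rule is_opI) (simp_all add: is_op_length, meson is_opD)

lemma is_op_id: "length d = Suc n \<Longrightarrow> is_op n d d (replicate (Suc n) id)"
  by (rule is_opI) (auto simp del: replicate_Suc)

lemma opap_nth: "length \<theta> = Suc n \<Longrightarrow> length s = Suc n \<Longrightarrow> j < Suc n \<Longrightarrow> opap \<theta> s ! j = (\<theta>!j) (s!j)"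
  by (simp add: opap_def)

lemma length_opap: "length \<theta> = Suc n \<Longrightarrow> length s = Suc n \<Longrightarrow> length (opap \<theta> s) = Suc n"
  by (simp add: opap_def)

lemma opap_vec: "opap (vec n f) (vec n h) = vec n (\<lambda>j. f j (h j))"
  by (auto simp: length_opap opap_nth intro!: nth_equalityI)

lemma vpair_opap: "is_op n d' d \<theta> \<Longrightarrow> vpair n d' s t \<Longrightarrow> vpair n d (opap \<theta> s) (opap \<theta> t)"
proof -
  assume th: "is_op n d' d \<theta>" and st: "vpair n d' s t"
  have "length d = Suc n" "length \<theta> = Suc n" using is_op_length[OF th] by auto
  moreover have "\<forall>k<Suc n. (\<theta>!k) (s!k) \<le> (\<theta>!k) (t!k) \<and> (\<theta>!k) (t!k) \<le> d!k"
    using is_opD[OF th] st unfolding vpair_def by blast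
  ultimately show ?thesis using st by (simp add: vpair_def length_opap opap_nth)
qed

text \<open>Multidegrees of a vertex, an edge in direction k, two composable such edges, and a square
  in directions j and k.\<close>
definition zero_deg :: "nat \<Rightarrow> nat list" where
  "zero_deg n = vec n (\<lambda>_. 0)"

definition unit_deg :: "nat \<Rightarrow> nat \<Rightarrow> nat list" where
  "unit_deg n k = vec n (\<lambda>j. if j = k then 1 else 0)"

definition double_deg :: "nat \<Rightarrow> nat \<Rightarrow> nat list" where
  "double_deg n k = vec n (\<lambda>j. if j = k then 2 else 0)"

definition square_deg :: "nat \<Rightarrow> nat \<Rightarrow> nat \<Rightarrow> nat list" where
  "square_deg n j k = vec n (\<lambda>i. if i = j \<or> i = k then 1 else 0)"

lemmas deg_defs = zero_deg_def unit_deg_def double_deg_def square_deg_def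

lemma sum_list_vec: "sum_list (vec n f) = (\<Sum>j<Suc n. f j)"
  by (simp add: vec_def sum_list_sum_nth atLeast0LessThan del: upt_Suc)

lemma sum_list_low_degs:
  "sum_list (zero_deg n) \<le> 2" "k < Suc n \<Longrightarrow> sum_list (unit_deg n k) \<le> 2"
  "k < Suc n \<Longrightarrow> sum_list (double_deg n k) \<le> 2"
  "j < Suc n \<Longrightarrow> k < Suc n \<Longrightarrow> j \<noteq> k \<Longrightarrow> sum_list (square_deg n j k) \<le> 2"
  by (simp_all add: deg_defs sum_list_vec sum.If_cases lessThan_Suc)
    (rule order_trans[OF card_mono[of "{j, k}"]]; auto)

definition vertex_op :: "nat \<Rightarrow> nat list \<Rightarrow> (nat \<Rightarrow> nat) list" where
  "vertex_op n v = vec n (\<lambda>j _. v!j)"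

text \<open>The operator picking the edge from v to v[k:=b] out of a simplex.\<close>
definition edge_op :: "nat \<Rightarrow> nat \<Rightarrow> nat list \<Rightarrow> nat \<Rightarrow> (nat \<Rightarrow> nat) list" where
  "edge_op n k v b = vec n (\<lambda>j. if j = k then (\<lambda>m. if m = 0 then v!j else b) else (\<lambda>_. v!j))"

lemma is_op_vertex_op: "length d = Suc n \<Longrightarrow> grid_point n d v \<Longrightarrow> is_op n (zero_deg n) d (vertex_op n v)"
  unfolding zero_deg_def vertex_op_def grid_point_def by (rule is_op_vec) auto

lemma is_op_edge_op:
  "length d = Suc n \<Longrightarrow> grid_point n d v \<Longrightarrow> k < Suc n \<Longrightarrow> v!k \<le> b \<Longrightarrow> b \<le> d!k \<Longrightarrow>
     is_op n (unit_deg n k) d (edge_op n k v b)"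
  unfolding unit_deg_def edge_op_def grid_point_def by (rule is_op_vec) auto

lemma vpair_unit_deg: "vpair n (unit_deg n k) (zero_deg n) (unit_deg n k)"
  by (simp add: vpair_def deg_defs)

lemma opap_edge_op_source: "length v = Suc n \<Longrightarrow> opap (edge_op n k v c) (zero_deg n) = v"
  by (auto simp: edge_op_def zero_deg_def length_opap opap_nth intro!: nth_equalityI)

lemma opap_edge_op_target: "length v = Suc n \<Longrightarrow> k < Suc n \<Longrightarrow> opap (edge_op n k v c) (unit_deg n k) = v[k:=c]"
  by (auto simp: edge_op_def unit_deg_def length_opap opap_nth nth_list_update intro!: nth_equalityI)

lemma msset_length: "is_msset n X \<Longrightarrow> x \<in> Smp X d \<Longrightarrow> length d = Suc n"
  unfolding is_msset_def by blast

lemma msset_Act_closed: "is_msset n X \<Longrightarrow> is_op n d' d \<theta> \<Longrightarrow> x \<in> Smp X d \<Longrightarrow> Act X d d' \<theta> x \<in> Smp X d'"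
  unfolding is_msset_def by blast

lemma msset_Act_id: "is_msset n X \<Longrightarrow> x \<in> Smp X d \<Longrightarrow> Act X d d (replicate (Suc n) id) x = x"
  unfolding is_msset_def by blast

lemma msset_Act_comp:
  "is_msset n X \<Longrightarrow> is_op n d' d \<theta> \<Longrightarrow> is_op n d'' d' \<phi> \<Longrightarrow> x \<in> Smp X d \<Longrightarrow>
     Act X d' d'' \<phi> (Act X d d' \<theta> x) = Act X d d'' (map2 (\<circ>) \<theta> \<phi>) x"
  unfolding is_msset_def by blast

lemma msset_Act_cong:
  "is_msset n X \<Longrightarrow> is_op n d' d \<theta> \<Longrightarrow> is_op n d' d \<theta>' \<Longrightarrow> x \<in> Smp X d \<Longrightarrow>
     (\<forall>k<Suc n. \<forall>m\<le>d'!k. (\<theta>!k) m = (\<theta>'!k) m) \<Longrightarrow> Act X d d' \<theta> x = Act X d d' \<theta>' x"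
  unfolding is_msset_def by blast

lemma msmap_closed: "is_msmap n X Y f \<Longrightarrow> x \<in> Smp X d \<Longrightarrow> f d x \<in> Smp Y d"
  unfolding is_msmap_def by blast

lemma msmap_natural:
  "is_msmap n X Y f \<Longrightarrow> is_op n d' d \<theta> \<Longrightarrow> x \<in> Smp X d \<Longrightarrow> f d' (Act X d d' \<theta> x) = Act Y d d' \<theta> (f d x)"
  unfolding is_msmap_def by blast

lemma msmap_undefined: "is_msmap n X Y f \<Longrightarrow> x \<notin> Smp X d \<Longrightarrow> f d x = undefined"
  unfolding is_msmap_def by blast

lemma is_msmap_msid: "is_msset n X \<Longrightarrow> is_msmap n X X (msid X)"
  unfolding is_msmap_def msid_def using msset_Act_closed by fastforce

lemma mscomp_msid: "mscomp X (msid X) f = msrestr X f"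
  by (intro ext) (simp add: mscomp_def msid_def msrestr_def)

lemma mscomp_assoc: "is_msmap n S X i \<Longrightarrow> mscomp S i (mscomp X f h) = mscomp S (mscomp S i f) h"
  by (intro ext) (simp add: mscomp_def msmap_closed)

lemma Act_sk2 [simp]: "Act (sk2 n X) = Act X"
  by (simp add: sk2_def)

lemma Smp_sk2:
  "Smp (sk2 n X) d = {Act X d0 d \<theta> x | d0 \<theta> x. sum_list d0 \<le> 2 \<and> x \<in> Smp X d0 \<and> is_op n d d0 \<theta>}"
  by (simp add: sk2_def)

lemma Smp_sk2_subset:
  assumes "\<And>d0 d \<theta> x. is_op n d d0 \<theta> \<Longrightarrow> x \<in> Smp X d0 \<Longrightarrow> Act X d0 d \<theta> x \<in> Smp X d"
  shows "Smp (sk2 n X) d \<subseteq> Smp X d"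
  unfolding Smp_sk2 by (auto intro: assms)

lemma sk2_subset: "is_msset n X \<Longrightarrow> x \<in> Smp (sk2 n X) d \<Longrightarrow> x \<in> Smp X d"
  using Smp_sk2_subset[of n X] msset_Act_closed[of n X] by blast

lemma in_sk2_if_low_dim: "is_msset n X \<Longrightarrow> sum_list d \<le> 2 \<Longrightarrow> x \<in> Smp X d \<Longrightarrow> x \<in> Smp (sk2 n X) d"
  unfolding Smp_sk2 using msset_Act_id[of n X x d] is_op_id[of d n] msset_length[of n X x d]
  by (metis (mono_tags, lifting) mem_Collect_eq)

lemma sk2_Act_closed:
  assumes X: "is_msset n X" and th: "is_op n d' d \<theta>" and x: "x \<in> Smp (sk2 n X) d"
  shows "Act X d d' \<theta> x \<in> Smp (sk2 n X) d'"
proof -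
  obtain d0 \<psi> z where z: "x = Act X d0 d \<psi> z" "sum_list d0 \<le> 2" "z \<in> Smp X d0" "is_op n d d0 \<psi>"
    using x unfolding Smp_sk2 by blast
  then have "Act X d d' \<theta> x = Act X d0 d' (map2 (\<circ>) \<psi> \<theta>) z" using msset_Act_comp[OF X z(4) th] by simp
  then show ?thesis using z is_op_comp[OF z(4) th] unfolding Smp_sk2 by blast
qed

lemma is_msset_sk2:
  assumes X: "is_msset n X"
  shows "is_msset n (sk2 n X)"
proof (unfold is_msset_def[of n "sk2 n X"] Act_sk2, intro conjI allI impI)
  show "Smp (sk2 n X) d = {}" if "length d \<noteq> Suc n" for d
    using that sk2_subset[OF X] msset_length[OF X] by blast
qed (use sk2_Act_closed[OF X] in blast,
     use sk2_subset[OF X] msset_Act_id[OF X] in blast,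
     use sk2_subset[OF X] msset_Act_comp[OF X] in blast,
     use sk2_subset[OF X] msset_Act_cong[OF X] in blast)

lemma is_msmap_sk2_incl: "is_msset n X \<Longrightarrow> is_msmap n (sk2 n X) X (msid (sk2 n X))"
  unfolding is_msmap_def msid_def using sk2_subset sk2_Act_closed by fastforce

lemma Smp_nerve: "Smp (nerve n C) d = {F. nsimp n C d F}"
  by (simp add: nerve_def)

lemma Act_nerve: "vpair n d' s t \<Longrightarrow> Act (nerve n C) d d' \<theta> F (s,t) = F (opap \<theta> s, opap \<theta> t)"
  by (simp add: nerve_def)

lemma nsimpD:
  assumes "nsimp n C d F"
  shows nsimp_hom: "\<And>s t. vpair n d s t \<Longrightarrow> F (s,t) \<in> Ar (amb C) \<and>
      Dom (amb C) (F (s,t)) = Dom (amb C) (F (s,s)) \<and> Cod (amb C) (F (s,t)) = Dom (amb C) (F (t,t))"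
    and nsimp_refl: "\<And>s. vpair n d s s \<Longrightarrow> F (s,s) = Idn (amb C) (Dom (amb C) (F (s,s)))"
    and nsimp_comp: "\<And>s t u. vpair n d s t \<Longrightarrow> vpair n d t u \<Longrightarrow> Comp (amb C) (F (t,u)) (F (s,t)) = F (s,u)"
    and nsimp_W: "\<And>s t. vpair n d s t \<Longrightarrow> in_w n s t \<Longrightarrow> F (s,t) \<in> W C"
    and nsimp_V: "\<And>i s t. i \<in> {1..n} \<Longrightarrow> vpair n d s t \<Longrightarrow> in_v n i s t \<Longrightarrow> F (s,t) \<in> V C i"
  using assms unfolding nsimp_def by blast+

lemma nsimp_Act_nerve:
  assumes th: "is_op n d' d \<theta>" and F: "nsimp n C d F"
  shows "nsimp n C d' (Act (nerve n C) d d' \<theta> F)"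
proof -
  have l: "length d' = Suc n" "length \<theta> = Suc n" using is_op_length[OF th] by auto
  have w: "in_w n (opap \<theta> s) (opap \<theta> t)" if "vpair n d' s t" "in_w n s t" for s t
    using that l by (auto simp: in_w_def vpair_def opap_nth)
  have v: "in_v n i (opap \<theta> s) (opap \<theta> t)" if "vpair n d' s t" "in_v n i s t" for i s t
    using that l by (auto simp: in_v_def vpair_def opap_nth)
  have refl: "vpair n d' s s \<and> vpair n d' t t" if "vpair n d' s t" for s t
    using that by (auto simp: vpair_def)
  note op = vpair_opap[OF th]
  let ?G = "Act (nerve n C) d d' \<theta> F"
  have "?G (s,t) \<in> Ar (amb C) \<and> Dom (amb C) (?G (s,t)) = Dom (amb C) (?G (s,s)) \<and>
      Cod (amb C) (?G (s,t)) = Dom (amb C) (?G (t,t))" if "vpair n d' s t" for s t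
    using nsimp_hom[OF F op[OF that]] refl[OF that] that by (simp add: Act_nerve)
  moreover have "?G (s,s) = Idn (amb C) (Dom (amb C) (?G (s,s)))" if "vpair n d' s s" for s
    using nsimp_refl[OF F op[OF that]] that by (simp add: Act_nerve)
  moreover have "Comp (amb C) (?G (t,u)) (?G (s,t)) = ?G (s,u)"
    if "vpair n d' s t" "vpair n d' t u" for s t u
    using nsimp_comp[OF F op op] vpair_trans that by (simp add: Act_nerve)
  moreover have "?G (s,t) \<in> W C" if "vpair n d' s t" "in_w n s t" for s t
    using nsimp_W[OF F op[OF that(1)] w[OF that]] that by (simp add: Act_nerve)
  moreover have "?G (s,t) \<in> V C i" if "i \<in> {1..n}" "vpair n d' s t" "in_v n i s t" for i s t
    using nsimp_V[OF F that(1) op[OF that(2)] v[OF that(2,3)]] that by (simp add: Act_nerve)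
  moreover have "?G (s,t) = undefined" if "\<not> vpair n d' s t" for s t
    using that by (simp add: nerve_def)
  ultimately show ?thesis unfolding nsimp_def using l by blast
qed

lemma Smp_sk2_nerve_subset: "Smp (sk2 n (nerve n C)) d \<subseteq> Smp (nerve n C) d"
  using Smp_sk2_subset nsimp_Act_nerve by (metis Smp_nerve mem_Collect_eq)

text \<open>Along the staircase from s to t, F (s,t) is a composite of edges.\<close>
lemma nsimp_eqI:
  assumes F: "nsimp n C d F" and G: "nsimp n C d G"
    and edges: "\<And>v k c. k < Suc n \<Longrightarrow> vpair n d v (v[k:=c]) \<Longrightarrow> F (v, v[k:=c]) = G (v, v[k:=c])"
  shows "F = G"
proof
  fix p :: "nat list \<times> nat list"
  obtain s t where p: "p = (s,t)" by fastforce
  show "F p = G p"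
  proof (cases "vpair n d s t")
    case False
    then show ?thesis using F G p unfolding nsimp_def by simp
  next
    case st: True
    have "k \<le> Suc n \<Longrightarrow> F (s, stair n k s t) = G (s, stair n k s t)" for k
    proof (induction k)
      case 0
      have "vpair n d s (s[0:=s!0])" using st by (auto simp: vpair_def intro: le_trans)
      then show ?case using edges[of 0 s "s!0"] stair_0[of s n t] st by (simp add: vpair_def)
    next
      case (Suc k)
      have k: "k < Suc n" using Suc by simp
      note steps = vpair_stair[OF st, of k, THEN conjunct1] vpair_stair_Suc[OF st k]
      have "F (s, stair n (Suc k) s t)
          = Comp (amb C) (F (stair n k s t, stair n (Suc k) s t)) (F (s, stair n k s t))"
        using nsimp_comp[OF F steps] by simp
      also have "\<dots> = Comp (amb C) (G (stair n k s t, stair n (Suc k) s t)) (G (s, stair n k s t))"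
        using Suc k edges[of k "stair n k s t" "t!k"] steps stair_Suc[OF k] by simp
      also have "\<dots> = G (s, stair n (Suc k) s t)"
        using nsimp_comp[OF G steps] by simp
      finally show ?case .
    qed
    from this[OF order_refl] show ?thesis using p stair_top[of t n s] st by (simp add: vpair_def)
  qed
qed

section \<open>Maps into a nerve are determined by the 2-skeleton\<close>

lemma nerve_map_edge:
  assumes f: "is_msmap n X (nerve n C) f" and y: "y \<in> Smp X d" and ld: "length d = Suc n"
    and k: "k < Suc n" and vc: "vpair n d v (v[k:=c])"
  shows "f d y (v, v[k:=c])
    = f (unit_deg n k) (Act X d (unit_deg n k) (edge_op n k v c) y) (zero_deg n, unit_deg n k)"
proof -
  have v: "grid_point n d v" using vpair_grid_point[OF vc] by blast
  have "is_op n (unit_deg n k) d (edge_op n k v c)"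
    using is_op_edge_op[OF ld v k] vpair_edge_bounds[OF vc k] by blast
  then have "f (unit_deg n k) (Act X d (unit_deg n k) (edge_op n k v c) y)
      = Act (nerve n C) d (unit_deg n k) (edge_op n k v c) (f d y)"
    using msmap_natural[OF f _ y] by blast
  moreover have "length v = Suc n" using v by (simp add: grid_point_def)
  ultimately show ?thesis
    by (simp add: Act_nerve[OF vpair_unit_deg] opap_edge_op_source opap_edge_op_target k)
qed

lemma nerve_map_eq_if_restr_eq:
  assumes Y: "is_msset n Y" and f1: "is_msmap n Y (nerve n C) f1" and f2: "is_msmap n Y (nerve n C) f2"
    and restr: "msrestr (sk2 n Y) f1 = msrestr (sk2 n Y) f2"
  shows "f1 = f2"
proof (rule ext, rule ext)
  fix d y
  show "f1 d y = f2 d y"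
  proof (cases "y \<in> Smp Y d")
    case y: True
    have ld: "length d = Suc n" using msset_length[OF Y y] .
    show ?thesis
    proof (rule nsimp_eqI)
      show "nsimp n C d (f1 d y)" "nsimp n C d (f2 d y)"
        using msmap_closed[OF f1 y] msmap_closed[OF f2 y] by (simp_all add: Smp_nerve)
    next
      fix v k c assume k: "k < Suc n" and vc: "vpair n d v (v[k:=c])"
      have v: "grid_point n d v" using vpair_grid_point[OF vc] by blast
      have "Act Y d (unit_deg n k) (edge_op n k v c) y \<in> Smp (sk2 n Y) (unit_deg n k)"
        using in_sk2_if_low_dim[OF Y sum_list_low_degs(2)[OF k]] msset_Act_closed[OF Y _ y]
          is_op_edge_op[OF ld v k] vpair_edge_bounds[OF vc k] by blast
      then show "f1 d y (v, v[k:=c]) = f2 d y (v, v[k:=c])"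
        using fun_cong[OF fun_cong[OF restr]]
          nerve_map_edge[OF f1 y ld k vc] nerve_map_edge[OF f2 y ld k vc]
        by (metis msrestr_def)
    qed
  next
    case False
    then show ?thesis using msmap_undefined f1 f2 by metis
  qed
qed

section \<open>Extending a map from the 2-skeleton into a nerve\<close>

lemmas op_defs = deg_defs edge_op_def vertex_op_def

locale sk2_nerve_map =
  fixes n :: nat and C :: "('o, 'a) relcat" and Y :: "'y msset"
    and g :: "nat list \<Rightarrow> 'y \<Rightarrow> nat list \<times> nat list \<Rightarrow> 'a"
  assumes C: "is_relcat n C" and Y: "is_msset n Y" and g: "is_msmap n (sk2 n Y) (nerve n C) g"
begin

abbreviation "R \<equiv> amb C"

lemma g_simplex: "x \<in> Smp (sk2 n Y) d \<Longrightarrow> nsimp n C d (g d x)"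
  using msmap_closed[OF g] by (simp add: Smp_nerve)

lemma low_Act_in_sk2: "y \<in> Smp Y d \<Longrightarrow> is_op n d0 d \<theta> \<Longrightarrow> sum_list d0 \<le> 2 \<Longrightarrow> Act Y d d0 \<theta> y \<in> Smp (sk2 n Y) d0"
  using in_sk2_if_low_dim[OF Y] msset_Act_closed[OF Y] by blast

lemma g_Act_factor:
  assumes y: "y \<in> Smp Y d" and \<theta>: "is_op n d0 d \<theta>" and low: "sum_list d0 \<le> 2"
    and \<phi>: "is_op n d1 d0 \<phi>" and \<psi>: "is_op n d1 d \<psi>"
    and factor: "\<forall>k<Suc n. \<forall>m\<le>d1!k. (\<psi>!k) m = (\<theta>!k) ((\<phi>!k) m)" and ab: "vpair n d1 a b"
  shows "g d1 (Act Y d d1 \<psi> y) (a,b) = g d0 (Act Y d d0 \<theta> y) (opap \<phi> a, opap \<phi> b)"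
proof -
  have "length \<theta> = Suc n" "length \<phi> = Suc n" using is_op_length \<theta> \<phi> by auto
  then have "Act Y d d1 \<psi> y = Act Y d d1 (map2 (\<circ>) \<theta> \<phi>) y"
    using msset_Act_cong[OF Y \<psi> is_op_comp[OF \<theta> \<phi>] y] factor by simp
  also have "\<dots> = Act Y d0 d1 \<phi> (Act Y d d0 \<theta> y)" using msset_Act_comp[OF Y \<theta> \<phi> y] by simp
  finally show ?thesis
    using msmap_natural[OF g \<phi> low_Act_in_sk2[OF y \<theta> low]] Act_nerve[OF ab] by simp
qed

definition edge_val :: "nat list \<Rightarrow> 'y \<Rightarrow> nat \<Rightarrow> nat list \<Rightarrow> nat \<Rightarrow> 'a" where
  "edge_val d y k v b =
     g (unit_deg n k) (Act Y d (unit_deg n k) (edge_op n k v b) y) (zero_deg n, unit_deg n k)"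

definition vertex_val :: "nat list \<Rightarrow> 'y \<Rightarrow> nat list \<Rightarrow> 'o" where
  "vertex_val d y v =
     Dom R (g (zero_deg n) (Act Y d (zero_deg n) (vertex_op n v) y) (zero_deg n, zero_deg n))"

lemma edge_val_hom:
  assumes y: "y \<in> Smp Y d" and v: "grid_point n d v" and k: "k < Suc n" and b: "v!k \<le> b" "b \<le> d!k"
  shows "edge_val d y k v b \<in> hom R (vertex_val d y v) (vertex_val d y (v[k:=b]))"
proof -
  have ld: "length d = Suc n" using msset_length[OF Y y] .
  have \<theta>: "is_op n (unit_deg n k) d (edge_op n k v b)" using is_op_edge_op ld v k b by blast
  let ?G = "g (unit_deg n k) (Act Y d (unit_deg n k) (edge_op n k v b) y)"
  have G: "nsimp n C (unit_deg n k) ?G"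
    using g_simplex low_Act_in_sk2[OF y \<theta> sum_list_low_degs(2)[OF k]] by blast
  have vz: "vpair n (zero_deg n) (zero_deg n) (zero_deg n)" by (simp add: vpair_def deg_defs)
  have \<phi>0: "is_op n (zero_deg n) (unit_deg n k) (vec n (\<lambda>_ _. 0))"
    unfolding deg_defs by (rule is_op_vec) auto
  have \<phi>1: "is_op n (zero_deg n) (unit_deg n k) (vec n (\<lambda>j _. if j = k then 1 else 0))"
    unfolding deg_defs by (rule is_op_vec) auto
  have v': "grid_point n d (v[k:=b])" using grid_point_update[OF v k b(2)] .
  have "vertex_val d y v = Dom R (?G (zero_deg n, zero_deg n))"
    using g_Act_factor[OF y \<theta> sum_list_low_degs(2)[OF k] \<phi>0 is_op_vertex_op[OF ld v] _ vz]
    unfolding vertex_val_def by (simp add: op_defs opap_vec cong: if_cong)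
  moreover have "vertex_val d y (v[k:=b]) = Dom R (?G (unit_deg n k, unit_deg n k))"
    using g_Act_factor[OF y \<theta> sum_list_low_degs(2)[OF k] \<phi>1 is_op_vertex_op[OF ld v'] _ vz] k v
    unfolding vertex_val_def by (simp add: op_defs opap_vec nth_list_update grid_point_def cong: if_cong)
  ultimately show ?thesis
    using nsimp_hom[OF G vpair_unit_deg] unfolding edge_val_def hom_def by simp
qed

lemma edge_val_refl:
  assumes y: "y \<in> Smp Y d" and v: "grid_point n d v" and k: "k < Suc n"
  shows "edge_val d y k v (v!k) = Idn R (vertex_val d y v)"
proof -
  have ld: "length d = Suc n" using msset_length[OF Y y] .
  have \<theta>: "is_op n (zero_deg n) d (vertex_op n v)" using is_op_vertex_op[OF ld v] .
  let ?H = "g (zero_deg n) (Act Y d (zero_deg n) (vertex_op n v) y)"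
  have H: "nsimp n C (zero_deg n) ?H" using g_simplex low_Act_in_sk2[OF y \<theta> sum_list_low_degs(1)] by blast
  have vz: "vpair n (zero_deg n) (zero_deg n) (zero_deg n)" by (simp add: vpair_def deg_defs)
  have \<phi>: "is_op n (unit_deg n k) (zero_deg n) (vec n (\<lambda>_ _. 0))" unfolding deg_defs by (rule is_op_vec) auto
  have \<psi>: "is_op n (unit_deg n k) d (edge_op n k v (v!k))"
    using is_op_edge_op[OF ld v k] v k by (simp add: grid_point_def)
  have "edge_val d y k v (v!k) = ?H (zero_deg n, zero_deg n)"
    using g_Act_factor[OF y \<theta> sum_list_low_degs(1) \<phi> \<psi> _ vpair_unit_deg]
    unfolding edge_val_def by (simp add: op_defs opap_vec cong: if_cong)
  then show ?thesis using nsimp_refl[OF H vz] unfolding vertex_val_def by simp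
qed

lemma edge_val_factor:
  assumes "y \<in> Smp Y d" "is_op n d0 d \<theta>" "sum_list d0 \<le> 2" "is_op n (unit_deg n k) d0 \<phi>"
    "is_op n (unit_deg n k) d (edge_op n k v b)"
    "\<forall>j<Suc n. \<forall>m\<le>unit_deg n k!j. (edge_op n k v b!j) m = (\<theta>!j) ((\<phi>!j) m)"
  shows "edge_val d y k v b = g d0 (Act Y d d0 \<theta> y) (opap \<phi> (zero_deg n), opap \<phi> (unit_deg n k))"
  unfolding edge_val_def using g_Act_factor[OF assms vpair_unit_deg] .

text \<open>Both sides are edges of the (0,..,2,..,0)-simplex spanned by v, v[k:=b], v[k:=c].\<close>
lemma edge_val_trans:
  assumes y: "y \<in> Smp Y d" and v: "grid_point n d v" and k: "k < Suc n"
    and bc: "v!k \<le> b" "b \<le> c" "c \<le> d!k"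
  shows "Comp R (edge_val d y k (v[k:=b]) c) (edge_val d y k v b) = edge_val d y k v c"
proof -
  have ld: "length d = Suc n" using msset_length[OF Y y] .
  have lv: "length v = Suc n" using v by (simp add: grid_point_def)
  define \<theta> where "\<theta> = vec n (\<lambda>j. if j = k then (\<lambda>m::nat. if m = 0 then v!j else if m = 1 then b else c)
      else (\<lambda>_. v!j))"
  have \<theta>: "is_op n (double_deg n k) d \<theta>"
    unfolding \<theta>_def double_deg_def using ld v bc by (intro is_op_vec) (auto simp: grid_point_def)
  note low = sum_list_low_degs(3)[OF k]
  let ?G = "g (double_deg n k) (Act Y d (double_deg n k) \<theta> y)"
  have G: "nsimp n C (double_deg n k) ?G" using g_simplex low_Act_in_sk2[OF y \<theta> low] by blast
  let ?\<phi>1 = "vec n (\<lambda>j m. if j = k then m else (0::nat))"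
  let ?\<phi>2 = "vec n (\<lambda>j m. if j = k then m + 1 else (0::nat))"
  let ?\<phi>3 = "vec n (\<lambda>j m. if j = k then 2 * m else (0::nat))"
  have \<phi>: "is_op n (unit_deg n k) (double_deg n k) ?\<phi>1" "is_op n (unit_deg n k) (double_deg n k) ?\<phi>2"
    "is_op n (unit_deg n k) (double_deg n k) ?\<phi>3"
    unfolding deg_defs by (rule is_op_vec; auto)+
  have \<psi>: "is_op n (unit_deg n k) d (edge_op n k v b)" "is_op n (unit_deg n k) d (edge_op n k (v[k:=b]) c)"
    "is_op n (unit_deg n k) d (edge_op n k v c)"
    using is_op_edge_op[OF ld v k] is_op_edge_op[OF ld grid_point_update[OF v k] k] bc k lv by auto
  have factor:
    "\<forall>j<Suc n. \<forall>m\<le>unit_deg n k!j. (edge_op n k v b!j) m = (\<theta>!j) ((?\<phi>1!j) m)"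
    "\<forall>j<Suc n. \<forall>m\<le>unit_deg n k!j. (edge_op n k (v[k:=b]) c!j) m = (\<theta>!j) ((?\<phi>2!j) m)"
    "\<forall>j<Suc n. \<forall>m\<le>unit_deg n k!j. (edge_op n k v c!j) m = (\<theta>!j) ((?\<phi>3!j) m)"
    unfolding op_defs \<theta>_def using k lv by (auto simp: nth_list_update)
  have ends: "opap ?\<phi>1 (zero_deg n) = zero_deg n" "opap ?\<phi>1 (unit_deg n k) = unit_deg n k"
    "opap ?\<phi>2 (zero_deg n) = unit_deg n k" "opap ?\<phi>2 (unit_deg n k) = double_deg n k"
    "opap ?\<phi>3 (zero_deg n) = zero_deg n" "opap ?\<phi>3 (unit_deg n k) = double_deg n k"
    unfolding deg_defs opap_vec by (rule vec_cong; simp)+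
  have "edge_val d y k v b = ?G (zero_deg n, unit_deg n k)"
    using edge_val_factor[OF y \<theta> low \<phi>(1) \<psi>(1) factor(1)] ends by simp
  moreover have "edge_val d y k (v[k:=b]) c = ?G (unit_deg n k, double_deg n k)"
    using edge_val_factor[OF y \<theta> low \<phi>(2) \<psi>(2) factor(2)] ends by simp
  moreover have "edge_val d y k v c = ?G (zero_deg n, double_deg n k)"
    using edge_val_factor[OF y \<theta> low \<phi>(3) \<psi>(3) factor(3)] ends by simp
  moreover have "vpair n (double_deg n k) (zero_deg n) (unit_deg n k)"
    "vpair n (double_deg n k) (unit_deg n k) (double_deg n k)"
    by (simp_all add: vpair_def deg_defs)
  ultimately show ?thesis using nsimp_comp[OF G] by simp
qed

text \<open>Both composites are paths through the square simplex spanned by v and v[j:=b,k:=c].\<close>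
lemma edge_val_square:
  assumes y: "y \<in> Smp Y d" and v: "grid_point n d v" and j: "j < Suc n" and k: "k < Suc n"
    and jk: "j \<noteq> k" and b: "v!j \<le> b" "b \<le> d!j" and c: "v!k \<le> c" "c \<le> d!k"
  shows "Comp R (edge_val d y k (v[j:=b]) c) (edge_val d y j v b)
       = Comp R (edge_val d y j (v[k:=c]) b) (edge_val d y k v c)"
proof -
  have ld: "length d = Suc n" using msset_length[OF Y y] .
  have lv: "length v = Suc n" using v by (simp add: grid_point_def)
  define \<theta> where "\<theta> = vec n (\<lambda>i. if i = j then (\<lambda>m::nat. if m = 0 then v!i else b)
      else if i = k then (\<lambda>m. if m = 0 then v!i else c) else (\<lambda>_. v!i))"
  have \<theta>: "is_op n (square_deg n j k) d \<theta>"
    unfolding \<theta>_def square_deg_def using ld v b c by (intro is_op_vec) (auto simp: grid_point_def)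
  note low = sum_list_low_degs(4)[OF j k jk]
  let ?G = "g (square_deg n j k) (Act Y d (square_deg n j k) \<theta> y)"
  have G: "nsimp n C (square_deg n j k) ?G" using g_simplex low_Act_in_sk2[OF y \<theta> low] by blast
  let ?\<phi>1 = "vec n (\<lambda>i m. if i = j then m else (0::nat))"
  let ?\<phi>2 = "vec n (\<lambda>i m. if i = j then 1 else if i = k then m else (0::nat))"
  let ?\<phi>3 = "vec n (\<lambda>i m. if i = k then m else (0::nat))"
  let ?\<phi>4 = "vec n (\<lambda>i m. if i = k then 1 else if i = j then m else (0::nat))"
  have \<phi>: "is_op n (unit_deg n j) (square_deg n j k) ?\<phi>1" "is_op n (unit_deg n k) (square_deg n j k) ?\<phi>2"
    "is_op n (unit_deg n k) (square_deg n j k) ?\<phi>3" "is_op n (unit_deg n j) (square_deg n j k) ?\<phi>4"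
    unfolding deg_defs by (rule is_op_vec; auto)+
  have \<psi>: "is_op n (unit_deg n j) d (edge_op n j v b)" "is_op n (unit_deg n k) d (edge_op n k (v[j:=b]) c)"
    "is_op n (unit_deg n k) d (edge_op n k v c)" "is_op n (unit_deg n j) d (edge_op n j (v[k:=c]) b)"
    using is_op_edge_op[OF ld v] is_op_edge_op[OF ld grid_point_update[OF v j b(2)] k]
      is_op_edge_op[OF ld grid_point_update[OF v k c(2)] j] j k jk b c lv by auto
  have factor:
    "\<forall>i<Suc n. \<forall>m\<le>unit_deg n j!i. (edge_op n j v b!i) m = (\<theta>!i) ((?\<phi>1!i) m)"
    "\<forall>i<Suc n. \<forall>m\<le>unit_deg n k!i. (edge_op n k (v[j:=b]) c!i) m = (\<theta>!i) ((?\<phi>2!i) m)"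
    "\<forall>i<Suc n. \<forall>m\<le>unit_deg n k!i. (edge_op n k v c!i) m = (\<theta>!i) ((?\<phi>3!i) m)"
    "\<forall>i<Suc n. \<forall>m\<le>unit_deg n j!i. (edge_op n j (v[k:=c]) b!i) m = (\<theta>!i) ((?\<phi>4!i) m)"
    unfolding op_defs \<theta>_def using j k jk lv by (auto simp: nth_list_update)
  have ends: "opap ?\<phi>1 (zero_deg n) = zero_deg n" "opap ?\<phi>1 (unit_deg n j) = unit_deg n j"
    "opap ?\<phi>2 (zero_deg n) = unit_deg n j" "opap ?\<phi>2 (unit_deg n k) = square_deg n j k"
    "opap ?\<phi>3 (zero_deg n) = zero_deg n" "opap ?\<phi>3 (unit_deg n k) = unit_deg n k"
    "opap ?\<phi>4 (zero_deg n) = unit_deg n k" "opap ?\<phi>4 (unit_deg n j) = square_deg n j k"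
    unfolding deg_defs opap_vec by (rule vec_cong; auto)+
  have "edge_val d y j v b = ?G (zero_deg n, unit_deg n j)"
    using edge_val_factor[OF y \<theta> low \<phi>(1) \<psi>(1) factor(1)] ends by simp
  moreover have "edge_val d y k (v[j:=b]) c = ?G (unit_deg n j, square_deg n j k)"
    using edge_val_factor[OF y \<theta> low \<phi>(2) \<psi>(2) factor(2)] ends by simp
  moreover have "edge_val d y k v c = ?G (zero_deg n, unit_deg n k)"
    using edge_val_factor[OF y \<theta> low \<phi>(3) \<psi>(3) factor(3)] ends by simp
  moreover have "edge_val d y j (v[k:=c]) b = ?G (unit_deg n k, square_deg n j k)"
    using edge_val_factor[OF y \<theta> low \<phi>(4) \<psi>(4) factor(4)] ends by simp
  moreover have "vpair n (square_deg n j k) (zero_deg n) (unit_deg n i)"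
    "vpair n (square_deg n j k) (unit_deg n i) (square_deg n j k)" if "i = j \<or> i = k" for i
    using that by (auto simp: vpair_def deg_defs)
  ultimately show ?thesis using nsimp_comp[OF G] by metis
qed

lemma grid_edges_edge_val: "y \<in> Smp Y d \<Longrightarrow> grid_edges R n d (edge_val d y) (vertex_val d y)"
  using C msset_length[OF Y] edge_val_hom edge_val_refl edge_val_trans edge_val_square
  by unfold_locales (auto simp: is_relcat_def)

lemma edge_val_W:
  assumes y: "y \<in> Smp Y d" and v: "grid_point n d v" and b: "v!0 \<le> b" "b \<le> d!0"
  shows "edge_val d y 0 v b \<in> W C"
proof -
  have ld: "length d = Suc n" using msset_length[OF Y y] .
  have "nsimp n C (unit_deg n 0) (g (unit_deg n 0) (Act Y d (unit_deg n 0) (edge_op n 0 v b) y))"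
    using g_simplex low_Act_in_sk2[OF y is_op_edge_op[OF ld v _ b] sum_list_low_degs(2)] by simp
  moreover have "in_w n (zero_deg n) (unit_deg n 0)" by (simp add: in_w_def deg_defs)
  ultimately show ?thesis using nsimp_W vpair_unit_deg unfolding edge_val_def by blast
qed

lemma edge_val_V:
  assumes y: "y \<in> Smp Y d" and v: "grid_point n d v" and i: "i \<in> {1..n}" and b: "v!i \<le> b" "b \<le> d!i"
  shows "edge_val d y i v b \<in> V C i"
proof -
  have ld: "length d = Suc n" using msset_length[OF Y y] .
  have i': "i < Suc n" using i by simp
  have "nsimp n C (unit_deg n i) (g (unit_deg n i) (Act Y d (unit_deg n i) (edge_op n i v b) y))"
    using g_simplex low_Act_in_sk2[OF y is_op_edge_op[OF ld v i' b] sum_list_low_degs(2)[OF i']] by simp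
  moreover have "in_v n i (zero_deg n) (unit_deg n i)" by (simp add: in_v_def deg_defs)
  ultimately show ?thesis using nsimp_V i vpair_unit_deg unfolding edge_val_def by blast
qed

lemma edge_val_W_if_in_w:
  assumes y: "y \<in> Smp Y d" and st: "in_w n s t" "k < Suc n" "s!k \<noteq> t!k"
    and v: "grid_point n d v" "v!k \<le> b" "b \<le> d!k"
  shows "edge_val d y k v b \<in> W C"
proof -
  have "k = 0" using st by (auto simp: in_w_def)
  then show ?thesis using edge_val_W[OF y] v by blast
qed

lemma edge_val_V_if_in_v:
  assumes y: "y \<in> Smp Y d" and i: "i \<in> {1..n}" and st: "in_v n i s t" "k < Suc n" "s!k \<noteq> t!k"
    and v: "grid_point n d v" "v!k \<le> b" "b \<le> d!k"
  shows "edge_val d y k v b \<in> V C i"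
proof (cases "k = 0")
  case True
  have "W C \<subseteq> V C i" using C i by (simp add: is_relcat_def)
  then show ?thesis using edge_val_W[OF y v(1)] v True by auto
next
  case False
  then have "k = i" using st by (auto simp: in_v_def)
  then show ?thesis using edge_val_V[OF y v(1) i] v by blast
qed

definition ext_simplex :: "nat list \<Rightarrow> 'y \<Rightarrow> nat list \<times> nat list \<Rightarrow> 'a" where
  "ext_simplex d y = (\<lambda>(s,t). if vpair n d s t
     then grid_edges.grid_map R n (edge_val d y) (vertex_val d y) s t else undefined)"

definition ext_map :: "nat list \<Rightarrow> 'y \<Rightarrow> nat list \<times> nat list \<Rightarrow> 'a" where
  "ext_map d y = (if y \<in> Smp Y d then ext_simplex d y else undefined)"

lemma ext_simplex_nsimp:
  assumes y: "y \<in> Smp Y d"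
  shows "nsimp n C d (ext_simplex d y)"
proof -
  interpret grid_edges R n d "edge_val d y" "vertex_val d y" using grid_edges_edge_val[OF y] .
  have F: "ext_simplex d y (s,t) = grid_map s t" if "vpair n d s t" for s t
    using that by (simp add: ext_simplex_def)
  have refl: "vpair n d s s \<and> vpair n d t t" if "vpair n d s t" for s t
    using vpair_grid_point[OF that] vpair_refl[OF length_d] by blast
  have subcats: "is_wide_subcat R (W C)" "\<And>i. i \<in> {1..n} \<Longrightarrow> is_wide_subcat R (V C i)"
    using C by (simp_all add: is_relcat_def)
  have "ext_simplex d y (s,t) \<in> Ar R \<and> Dom R (ext_simplex d y (s,t)) = Dom R (ext_simplex d y (s,s)) \<and>
      Cod R (ext_simplex d y (s,t)) = Dom R (ext_simplex d y (t,t))" if "vpair n d s t" for s t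
    using grid_map_hom[OF that] refl[OF that] grid_map_hom F that by (simp add: hom_def)
  moreover have "ext_simplex d y (s,s) = Idn R (Dom R (ext_simplex d y (s,s)))" if "vpair n d s s" for s
    using grid_map_refl grid_map_hom[OF that] vpair_grid_point[OF that] F[OF that] by (simp add: hom_def)
  moreover have "Comp R (ext_simplex d y (t,u)) (ext_simplex d y (s,t)) = ext_simplex d y (s,u)"
    if "vpair n d s t" "vpair n d t u" for s t u
    using grid_map_comp[OF that] F that vpair_trans[OF that] by simp
  moreover have "ext_simplex d y (s,t) \<in> W C" if "vpair n d s t" "in_w n s t" for s t
    using grid_map_in_subcat[OF subcats(1) that(1) edge_val_W_if_in_w[OF y that(2)]] F[OF that(1)] by simp
  moreover have "ext_simplex d y (s,t) \<in> V C i" if "i \<in> {1..n}" "vpair n d s t" "in_v n i s t" for i s t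
    using grid_map_in_subcat[OF subcats(2)[OF that(1)] that(2) edge_val_V_if_in_v[OF y that(1,3)]] F[OF that(2)] by simp
  moreover have "ext_simplex d y (s,t) = undefined" if "\<not> vpair n d s t" for s t
    using that by (simp add: ext_simplex_def)
  ultimately show ?thesis unfolding nsimp_def using length_d by blast
qed

lemma ext_simplex_edge:
  assumes y: "y \<in> Smp Y d" and k: "k < Suc n" and vc: "vpair n d v (v[k:=c])"
  shows "ext_simplex d y (v, v[k:=c]) = edge_val d y k v c"
proof -
  interpret grid_edges R n d "edge_val d y" "vertex_val d y" using grid_edges_edge_val[OF y] .
  show ?thesis
    using grid_map_edge[of v k c] vpair_grid_point[OF vc] vpair_edge_bounds[OF vc k] k vc
    by (simp add: ext_simplex_def)
qed

lemma ext_simplex_Act: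
  assumes \<theta>: "is_op n d' d \<theta>" and y: "y \<in> Smp Y d"
  shows "ext_simplex d' (Act Y d d' \<theta> y) = Act (nerve n C) d d' \<theta> (ext_simplex d y)"
proof (rule nsimp_eqI)
  have y': "Act Y d d' \<theta> y \<in> Smp Y d'" using msset_Act_closed[OF Y \<theta> y] .
  show "nsimp n C d' (ext_simplex d' (Act Y d d' \<theta> y))" using ext_simplex_nsimp[OF y'] .
  show "nsimp n C d' (Act (nerve n C) d d' \<theta> (ext_simplex d y))"
    using nsimp_Act_nerve[OF \<theta> ext_simplex_nsimp[OF y]] .
  fix u k c assume k: "k < Suc n" and uc: "vpair n d' u (u[k:=c])"
  have ld: "length d = Suc n" "length d' = Suc n" "length \<theta> = Suc n" using is_op_length[OF \<theta>] by auto
  have u: "grid_point n d' u" and c: "u!k \<le> c" "c \<le> d'!k"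
    using vpair_grid_point[OF uc] vpair_edge_bounds[OF uc k] by auto
  let ?w = "opap \<theta> u"
  have w_upd: "opap \<theta> (u[k:=c]) = ?w[k := (\<theta>!k) c]"
    using ld u k by (auto simp: grid_point_def length_opap opap_nth nth_list_update intro!: nth_equalityI)
  have wc: "vpair n d ?w (?w[k := (\<theta>!k) c])" using vpair_opap[OF \<theta> uc] w_upd by simp
  have w: "grid_point n d ?w" and c': "?w!k \<le> (\<theta>!k) c" "(\<theta>!k) c \<le> d!k"
    using vpair_grid_point[OF wc] vpair_edge_bounds[OF wc k] by auto
  have \<psi>: "is_op n (unit_deg n k) d' (edge_op n k u c)" using is_op_edge_op[OF ld(2) u k c] .
  have "Act Y d' (unit_deg n k) (edge_op n k u c) (Act Y d d' \<theta> y)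
      = Act Y d (unit_deg n k) (map2 (\<circ>) \<theta> (edge_op n k u c)) y"
    using msset_Act_comp[OF Y \<theta> \<psi> y] .
  also have "\<dots> = Act Y d (unit_deg n k) (edge_op n k ?w ((\<theta>!k) c)) y"
    using msset_Act_cong[OF Y is_op_comp[OF \<theta> \<psi>] is_op_edge_op[OF ld(1) w k c'] y] ld u
    by (auto simp: edge_op_def unit_deg_def opap_nth grid_point_def)
  finally have "edge_val d' (Act Y d d' \<theta> y) k u c = edge_val d y k ?w ((\<theta>!k) c)"
    unfolding edge_val_def by simp
  then show "ext_simplex d' (Act Y d d' \<theta> y) (u, u[k:=c])
      = Act (nerve n C) d d' \<theta> (ext_simplex d y) (u, u[k:=c])"
    using ext_simplex_edge[OF y' k uc] ext_simplex_edge[OF y k wc] w_upd by (simp add: Act_nerve[OF uc])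
qed

lemma is_msmap_ext_map: "is_msmap n Y (nerve n C) ext_map"
  unfolding is_msmap_def
  using ext_simplex_nsimp ext_simplex_Act msset_Act_closed[OF Y]
  by (simp add: ext_map_def Smp_nerve)

lemma msrestr_ext_map: "msrestr (sk2 n Y) ext_map = g"
proof (rule ext, rule ext)
  fix d x
  show "msrestr (sk2 n Y) ext_map d x = g d x"
  proof (cases "x \<in> Smp (sk2 n Y) d")
    case x: True
    have y: "x \<in> Smp Y d" using sk2_subset[OF Y x] .
    have "ext_simplex d x = g d x"
    proof (rule nsimp_eqI[OF ext_simplex_nsimp[OF y] g_simplex[OF x]])
      fix v k c assume k: "k < Suc n" and vc: "vpair n d v (v[k:=c])"
      show "ext_simplex d x (v, v[k:=c]) = g d x (v, v[k:=c])"
        using ext_simplex_edge[OF y k vc] nerve_map_edge[OF g x msset_length[OF Y y] k vc]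
        by (simp add: edge_val_def)
    qed
    then show ?thesis using x y by (simp add: msrestr_def ext_map_def)
  qed (use msmap_undefined[OF g] in \<open>simp add: msrestr_def\<close>)
qed

end

lemma nerve_map_extends_from_sk2:
  assumes "is_relcat n C" "is_msset n Y" "is_msmap n (sk2 n Y) (nerve n C) g"
  shows "\<exists>f. is_msmap n Y (nerve n C) f \<and> msrestr (sk2 n Y) f = g"
proof -
  interpret sk2_nerve_map n C Y g using assms by unfold_locales
  show ?thesis using is_msmap_ext_map msrestr_ext_map by blast
qed

lemma is_msmap_msrestr_sk2:
  assumes Y: "is_msset n Y" and f: "is_msmap n Y Z f"
  shows "is_msmap n (sk2 n Y) (sk2 n Z) (msrestr (sk2 n Y) f)"
  unfolding is_msmap_def Act_sk2
proof (intro conjI allI impI)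
  fix d x assume x: "x \<in> Smp (sk2 n Y) d"
  then obtain d0 \<theta> x0 where x0: "x = Act Y d0 d \<theta> x0" "sum_list d0 \<le> 2" "x0 \<in> Smp Y d0" "is_op n d d0 \<theta>"
    unfolding Smp_sk2 by blast
  then have "f d x = Act Z d0 d \<theta> (f d0 x0)" "f d0 x0 \<in> Smp Z d0"
    using msmap_natural[OF f] msmap_closed[OF f] by auto
  then show "msrestr (sk2 n Y) f d x \<in> Smp (sk2 n Z) d"
    unfolding msrestr_def Smp_sk2 using x x0 by auto
next
  fix d d' \<theta> x assume \<theta>: "is_op n d' d \<theta>" and x: "x \<in> Smp (sk2 n Y) d"
  then show "msrestr (sk2 n Y) f d' (Act Y d d' \<theta> x) = Act Z d d' \<theta> (msrestr (sk2 n Y) f d x)"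
    using sk2_Act_closed[OF Y \<theta> x] msmap_natural[OF f \<theta> sk2_subset[OF Y x]] by (simp add: msrestr_def)
qed (simp add: msrestr_def)

lemma is_msmap_into_nerve_if_into_sk2:
  "is_msmap n X (sk2 n (nerve n C)) g \<Longrightarrow> is_msmap n X (nerve n C) g"
  unfolding is_msmap_def Act_sk2 using Smp_sk2_nerve_subset by blast

theorem bij_betw_msrestr_sk2_nerve:
  assumes C: "is_relcat n C" and Y: "is_msset n Y"
  shows "bij_betw (msrestr (sk2 n Y)) (mshom n Y (nerve n C)) (mshom n (sk2 n Y) (sk2 n (nerve n C)))"
proof (rule bij_betw_imageI)
  show "inj_on (msrestr (sk2 n Y)) (mshom n Y (nerve n C))"
    using nerve_map_eq_if_restr_eq[OF Y] by (auto simp: inj_on_def mshom_def)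
  show "msrestr (sk2 n Y) ` mshom n Y (nerve n C) = mshom n (sk2 n Y) (sk2 n (nerve n C))"
  proof
    show "msrestr (sk2 n Y) ` mshom n Y (nerve n C) \<subseteq> mshom n (sk2 n Y) (sk2 n (nerve n C))"
      using is_msmap_msrestr_sk2[OF Y] by (auto simp: mshom_def)
    show "mshom n (sk2 n Y) (sk2 n (nerve n C)) \<subseteq> msrestr (sk2 n Y) ` mshom n Y (nerve n C)"
      using nerve_map_extends_from_sk2[OF C Y] is_msmap_into_nerve_if_into_sk2
      by (fastforce simp: mshom_def)
  qed
qed

lemma relfunD:
  assumes "is_relfun n R S G"
  shows relfun_Ar: "\<And>f. f \<in> Ar (amb R) \<Longrightarrow> G f \<in> Ar (amb S)"
    and relfun_Dom: "\<And>f. f \<in> Ar (amb R) \<Longrightarrow> Dom (amb S) (G f) = Dom (amb S) (G (Idn (amb R) (Dom (amb R) f)))"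
    and relfun_Cod: "\<And>f. f \<in> Ar (amb R) \<Longrightarrow> Cod (amb S) (G f) = Dom (amb S) (G (Idn (amb R) (Cod (amb R) f)))"
    and relfun_Idn: "\<And>a. a \<in> Ob (amb R) \<Longrightarrow> G (Idn (amb R) a) = Idn (amb S) (Dom (amb S) (G (Idn (amb R) a)))"
    and relfun_Comp: "\<And>f g. f \<in> Ar (amb R) \<Longrightarrow> g \<in> Ar (amb R) \<Longrightarrow> Cod (amb R) f = Dom (amb R) g \<Longrightarrow>
        G (Comp (amb R) g f) = Comp (amb S) (G g) (G f)"
    and relfun_W: "\<And>f. f \<in> W R \<Longrightarrow> G f \<in> W S"
    and relfun_V: "\<And>i f. i \<in> {1..n} \<Longrightarrow> f \<in> V R i \<Longrightarrow> G f \<in> V S i"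
  using assms unfolding is_relfun_def by blast+

lemma relcat_cat: "is_relcat n R \<Longrightarrow> is_cat (amb R)"
  by (simp add: is_relcat_def)

lemma relcat_WV_Ar: "is_relcat n R \<Longrightarrow> W R \<subseteq> Ar (amb R) \<and> (\<forall>i\<in>{1..n}. V R i \<subseteq> Ar (amb R))"
  by (simp add: is_relcat_def is_wide_subcat_def)

lemma relfun_Idn_Dom_Cod:
  assumes R: "is_relcat n R" and G: "is_relfun n R S G" and f: "f \<in> Ar (amb R)"
  shows "G (Idn (amb R) (Dom (amb R) f)) = Idn (amb S) (Dom (amb S) (G f))"
    and "G (Idn (amb R) (Cod (amb R) f)) = Idn (amb S) (Cod (amb S) (G f))"
  using relcat_cat[OF R] f relfun_Idn[OF G] relfun_Dom[OF G f] relfun_Cod[OF G f]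
  unfolding is_cat_def by metis+

lemma relcomp_relfun:
  assumes R: "is_relcat n R" and S: "is_relcat n S" and G: "is_relfun n R S G" and H: "is_relfun n S T H"
  shows "is_relfun n R T (relcomp R G H)"
proof -
  have catR: "Idn (amb R) a \<in> Ar (amb R)" if "a \<in> Ob (amb R)" for a
    using relcat_cat[OF R] that unfolding is_cat_def by blast
  have domR: "Dom (amb R) f \<in> Ob (amb R) \<and> Cod (amb R) f \<in> Ob (amb R)" if "f \<in> Ar (amb R)" for f
    using relcat_cat[OF R] that unfolding is_cat_def by blast
  have compR: "Comp (amb R) g f \<in> Ar (amb R)"
    if "f \<in> Ar (amb R)" "g \<in> Ar (amb R)" "Cod (amb R) f = Dom (amb R) g" for f g
    using relcat_cat[OF R] that unfolding is_cat_def by blast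
  have obS: "Dom (amb S) g \<in> Ob (amb S)" if "g \<in> Ar (amb S)" for g
    using relcat_cat[OF S] that unfolding is_cat_def by blast
  note idn = relfun_Idn_Dom_Cod[OF R G]
  show ?thesis
    unfolding is_relfun_def relcomp_def
  proof (intro conjI ballI allI impI)
    fix f assume f: "f \<in> Ar (amb R)"
    show "(if f \<in> Ar (amb R) then H (G f) else undefined) \<in> Ar (amb T)"
      using f relfun_Ar[OF G] relfun_Ar[OF H] by simp
    show "Dom (amb T) (if f \<in> Ar (amb R) then H (G f) else undefined) =
      Dom (amb T) (if Idn (amb R) (Dom (amb R) f) \<in> Ar (amb R)
        then H (G (Idn (amb R) (Dom (amb R) f))) else undefined)"
      using f catR domR relfun_Dom[OF H relfun_Ar[OF G f]] idn(1)[OF f] by simp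
    show "Cod (amb T) (if f \<in> Ar (amb R) then H (G f) else undefined) =
      Dom (amb T) (if Idn (amb R) (Cod (amb R) f) \<in> Ar (amb R)
        then H (G (Idn (amb R) (Cod (amb R) f))) else undefined)"
      using f catR domR relfun_Cod[OF H relfun_Ar[OF G f]] idn(2)[OF f] by simp
  next
    fix a assume a: "a \<in> Ob (amb R)"
    show "(if Idn (amb R) a \<in> Ar (amb R) then H (G (Idn (amb R) a)) else undefined) =
       Idn (amb T) (Dom (amb T) (if Idn (amb R) a \<in> Ar (amb R) then H (G (Idn (amb R) a)) else undefined))"
      using catR[OF a] relfun_Idn[OF G a] relfun_Idn[OF H obS[OF relfun_Ar[OF G catR[OF a]]]] by simp
  next
    fix f g assume fg: "f \<in> Ar (amb R)" "g \<in> Ar (amb R)" "Cod (amb R) f = Dom (amb R) g"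
    have "Cod (amb S) (G f) = Dom (amb S) (G g)"
      using relfun_Dom[OF G fg(2)] relfun_Cod[OF G fg(1)] fg(3) by simp
    then show "(if Comp (amb R) g f \<in> Ar (amb R) then H (G (Comp (amb R) g f)) else undefined) =
       Comp (amb T) (if g \<in> Ar (amb R) then H (G g) else undefined)
         (if f \<in> Ar (amb R) then H (G f) else undefined)"
      using compR[OF fg] fg relfun_Comp[OF G fg] relfun_Comp[OF H relfun_Ar[OF G fg(1)] relfun_Ar[OF G fg(2)]]
      by simp
  qed (use relcat_WV_Ar[OF R] relfun_W[OF G] relfun_W[OF H] relfun_V[OF G] relfun_V[OF H] in auto)
qed

lemma relcomp_relid_left: "is_relfun n R S G \<Longrightarrow> relcomp R (relid R) G = G"
  by (rule ext) (simp add: relcomp_def relid_def is_relfun_def)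

lemma relcomp_relid_right: "is_relfun n R S G \<Longrightarrow> relcomp R G (relid S) = G"
  by (rule ext) (simp add: relcomp_def relid_def is_relfun_def)

section \<open>Left adjoints of the nerve\<close>

locale left_adjoint_of_N =
  fixes n :: nat
    and K :: "'x msset \<Rightarrow> ('o, 'a) relcat"
    and Km :: "'x msset \<Rightarrow> 'x msset \<Rightarrow> (nat list \<Rightarrow> 'x \<Rightarrow> 'x) \<Rightarrow> 'a \<Rightarrow> 'a"
    and \<Phi> :: "'x msset \<Rightarrow> ('o, 'a) relcat \<Rightarrow> ('a \<Rightarrow> 'a) \<Rightarrow> nat list \<Rightarrow> 'x \<Rightarrow> (nat list \<times> nat list \<Rightarrow> 'a)"
  assumes adj: "is_left_adjoint_of_N n K Km \<Phi>"
begin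

lemma K_relcat: "is_msset n X \<Longrightarrow> is_relcat n (K X)"
  using adj by (simp add: is_left_adjoint_of_N_def)

lemma Km_relfun: "is_msset n X \<Longrightarrow> is_msset n Y \<Longrightarrow> is_msmap n X Y f \<Longrightarrow> is_relfun n (K X) (K Y) (Km X Y f)"
  using adj by (simp add: is_left_adjoint_of_N_def)

lemma Km_msid: "is_msset n X \<Longrightarrow> Km X X (msid X) = relid (K X)"
  using adj by (simp add: is_left_adjoint_of_N_def)

lemma relfun_relid: "is_msset n X \<Longrightarrow> is_relfun n (K X) (K X) (relid (K X))"
  using Km_relfun[OF _ _ is_msmap_msid] Km_msid by simp

lemma \<Phi>_bij:
  "is_msset n X \<Longrightarrow> is_relcat n C \<Longrightarrow> bij_betw (\<Phi> X C) {G. is_relfun n (K X) C G} (mshom n X (nerve n C))"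
  using adj by (simp add: is_left_adjoint_of_N_def)

lemma \<Phi>_natural_left:
  "is_msset n X \<Longrightarrow> is_msset n Y \<Longrightarrow> is_relcat n C \<Longrightarrow> is_msmap n X Y f \<Longrightarrow> is_relfun n (K Y) C G \<Longrightarrow>
     \<Phi> X C (relcomp (K X) (Km X Y f) G) = mscomp X f (\<Phi> Y C G)"
  using adj by (simp add: is_left_adjoint_of_N_def)

lemma \<Phi>_natural_right:
  "is_msset n X \<Longrightarrow> is_relcat n C \<Longrightarrow> is_relcat n D \<Longrightarrow> is_relfun n (K X) C G \<Longrightarrow> is_relfun n C D H \<Longrightarrow>
     \<Phi> X D (relcomp (K X) G H) = mscomp X (\<Phi> X C G) (nmap n C H)"
  using adj by (simp add: is_left_adjoint_of_N_def)

lemma \<Phi>_mshom: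
  "is_msset n X \<Longrightarrow> is_relcat n C \<Longrightarrow> is_relfun n (K X) C G \<Longrightarrow> \<Phi> X C G \<in> mshom n X (nerve n C)"
  using bij_betwE[OF \<Phi>_bij] by blast

lemma \<Phi>_inj:
  "is_msset n X \<Longrightarrow> is_relcat n C \<Longrightarrow> is_relfun n (K X) C G1 \<Longrightarrow> is_relfun n (K X) C G2 \<Longrightarrow>
     \<Phi> X C G1 = \<Phi> X C G2 \<Longrightarrow> G1 = G2"
  using inj_onD[OF bij_betw_imp_inj_on[OF \<Phi>_bij]] by blast

lemma \<Phi>_surj:
  assumes "is_msset n X" "is_relcat n C" "h \<in> mshom n X (nerve n C)"
  obtains G where "is_relfun n (K X) C G" "\<Phi> X C G = h"
  using bij_betw_imp_surj_on[OF \<Phi>_bij[OF assms(1,2)]] assms(3) by (metis imageE mem_Collect_eq)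

text \<open>Yoneda: the inverse of K i is the relative functor corresponding to an extension along i
  of the unit S \<rightarrow> N(K S).\<close>
lemma Km_iso_if_restriction_bij:
  assumes S: "is_msset n S" and X: "is_msset n X" and i: "is_msmap n S X i"
    and ext: "\<And>g. g \<in> mshom n S (nerve n (K S)) \<Longrightarrow> \<exists>f \<in> mshom n X (nerve n (K S)). mscomp S i f = g"
    and uniq: "\<And>f1 f2. f1 \<in> mshom n X (nerve n (K X)) \<Longrightarrow> f2 \<in> mshom n X (nerve n (K X)) \<Longrightarrow>
       mscomp S i f1 = mscomp S i f2 \<Longrightarrow> f1 = f2"
  shows "relcat_iso n (K S) (K X) (Km S X i)"
proof -
  let ?G = "Km S X i"
  have KS: "is_relcat n (K S)" and KX: "is_relcat n (K X)" using K_relcat S X by blast+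
  have G: "is_relfun n (K S) (K X) ?G" using Km_relfun[OF S X i] .
  note idS = relfun_relid[OF S] and idX = relfun_relid[OF X]
  define \<eta> where "\<eta> = \<Phi> S (K S) (relid (K S))"
  have "\<eta> \<in> mshom n S (nerve n (K S))" unfolding \<eta>_def using \<Phi>_mshom[OF S KS idS] .
  then obtain \<eta>' where \<eta>': "\<eta>' \<in> mshom n X (nerve n (K S))" "mscomp S i \<eta>' = \<eta>" using ext by blast
  obtain H where H: "is_relfun n (K X) (K S) H" "\<Phi> X (K S) H = \<eta>'" using \<Phi>_surj[OF X KS \<eta>'(1)] .
  have GH: "relcomp (K S) ?G H = relid (K S)"
  proof (rule \<Phi>_inj[OF S KS relcomp_relfun[OF KS KX G H(1)] idS])
    show "\<Phi> S (K S) (relcomp (K S) ?G H) = \<Phi> S (K S) (relid (K S))"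
      using \<Phi>_natural_left[OF S X KS i H(1)] H(2) \<eta>'(2) \<eta>_def by simp
  qed
  have HG: "relcomp (K X) H ?G = relid (K X)"
  proof (rule \<Phi>_inj[OF X KX relcomp_relfun[OF KX KS H(1) G] idX], rule uniq)
    have "mscomp S i (\<Phi> X (K X) (relcomp (K X) H ?G)) = mscomp S \<eta> (nmap n (K S) ?G)"
      using \<Phi>_natural_right[OF X KS KX H(1) G] H(2) \<eta>'(2) by (simp add: mscomp_assoc[OF i])
    also have "\<dots> = \<Phi> S (K X) ?G"
      using \<Phi>_natural_right[OF S KS KX idS G] relcomp_relid_left[OF G] \<eta>_def by simp
    also have "\<dots> = mscomp S i (\<Phi> X (K X) (relid (K X)))"
      using \<Phi>_natural_left[OF S X KX i idX] relcomp_relid_right[OF G] by simp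
    finally show "mscomp S i (\<Phi> X (K X) (relcomp (K X) H ?G)) = mscomp S i (\<Phi> X (K X) (relid (K X)))" .
  qed (use \<Phi>_mshom[OF X KX] relcomp_relfun[OF KX KS H(1) G] idX in blast)+
  show ?thesis unfolding relcat_iso_def using G H(1) GH HG by blast
qed

end

theorem mainTheorem3:
  fixes n :: nat
    and K :: "'x msset \<Rightarrow> ('o, 'a) relcat"
    and Km :: "'x msset \<Rightarrow> 'x msset \<Rightarrow> (nat list \<Rightarrow> 'x \<Rightarrow> 'x) \<Rightarrow> 'a \<Rightarrow> 'a"
    and \<Phi> :: "'x msset \<Rightarrow> ('o, 'a) relcat \<Rightarrow> ('a \<Rightarrow> 'a) \<Rightarrow> nat list \<Rightarrow> 'x \<Rightarrow> (nat list \<times> nat list \<Rightarrow> 'a)"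
  assumes "n \<ge> 1"
    and "is_left_adjoint_of_N n K Km \<Phi>"
  shows "(\<forall>X. is_msset n X \<longrightarrow>
            relcat_iso n (K (sk2 n X)) (K X) (Km (sk2 n X) X (msid (sk2 n X))))
       \<and> (\<forall>(C :: ('p, 'b) relcat) (Y :: 'y msset). is_relcat n C \<longrightarrow> is_msset n Y \<longrightarrow>
            bij_betw (msrestr (sk2 n Y)) (mshom n Y (nerve n C))
                     (mshom n (sk2 n Y) (sk2 n (nerve n C))))"
proof -
  interpret left_adjoint_of_N n K Km \<Phi> using assms(2) by unfold_locales
  have "relcat_iso n (K (sk2 n X)) (K X) (Km (sk2 n X) X (msid (sk2 n X)))" if X: "is_msset n X" for X
  proof (rule Km_iso_if_restriction_bij[OF is_msset_sk2[OF X] X is_msmap_sk2_incl[OF X]])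
    show "\<exists>f \<in> mshom n X (nerve n (K (sk2 n X))). mscomp (sk2 n X) (msid (sk2 n X)) f = g"
      if "g \<in> mshom n (sk2 n X) (nerve n (K (sk2 n X)))" for g
      using nerve_map_extends_from_sk2[OF K_relcat[OF is_msset_sk2[OF X]] X] that
      by (simp add: mshom_def mscomp_msid)
    show "f1 = f2" if "f1 \<in> mshom n X (nerve n (K X))" "f2 \<in> mshom n X (nerve n (K X))"
      "mscomp (sk2 n X) (msid (sk2 n X)) f1 = mscomp (sk2 n X) (msid (sk2 n X)) f2" for f1 f2
      using nerve_map_eq_if_restr_eq[OF X] that by (simp add: mshom_def mscomp_msid)
  qed
  then show ?thesis using bij_betw_msrestr_sk2_nerve by blast
qed

end
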